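(* Let $K\ge1$, $\varphi:[-1,1]\to\mathbb{C}$ infinitely differentiable, $\lambda\in\mathbb{C}$, $\tau>0$, $q\in\{0,1,\dots,K\}$, and let $\sigma_{K,q}$ be a constant such that $\|f-P_Kf\|_{C^0}\le\sigma_{K,q}\|f^{(q+1)}\|_{C^0}$ for all $f\in C^{q+1}([-1,1],\mathbb{C})$. Set $$\tilde C=\sigma_{K,q}\Big(|\tau\lambda|^{q+1}\frac{e^{2\tau\Re(\lambda)}-1}{\Re(\lambda)}\|\varphi\|_{C^0}+\tau\sum_{i=0}^q|\tau\lambda|^i\|\varphi^{(q-i)}\|_{C^0}\Big),$$ where $\frac{e^{2\tau\Re(\lambda)}-1}{\Re(\lambda)}$ is interpreted as $2\tau$ if $\Re(\lambda)=0$. Then $$\Big\|(I-P_K)\Big(t\mapsto\tau\int_{-1}^te^{\tau(t-s)\lambda}\varphi(s)\,ds\Big)\Big\|_{C^0}\le\tilde C.$$ Moreover, if $\varphi$ extends analytically to $\mathcal{E}_\rho$ for some $\rho>1$ and is bounded there, then with $\zeta(x)=(e^x-1)/x$ for $x\neq0$, $\zeta(0)=1$, and $$\check C=\frac{2\tau(\rho+\rho^{-1}+2)}{\rho^K(\rho-1)}\,\zeta\Big(\tau\Big(\Re(\lambda)+\tfrac12\sqrt{\Re(\lambda)^2(\rho+\rho^{-1})^2+\Im(\lambda)^2(\rho-\rho^{-1})^2}\Big)\Big)\sup_{z\in\mathcal{E}_\rho}|\varphi(z)|,$$ one also has $$\Big\|(I-P_K)\Big(t\mapsto\tau\int_{-1}^te^{\tau(t-s)\lambda}\varphi(s)\,ds\Big)\Big\|_{C^0}\le\check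 C.$$
   Context: $P_K$ maps $f\in C([-1,1],\mathbb{C})$ to its polynomial interpolant of degree $\le K$ at the Chebyshev points $t_k=\cos(\pi k/K)$, $k=0,\dots,K$; $\|\cdot\|_{C^0}$ is the sup norm on $[-1,1]$. For $\rho\ge1$, $\mathcal{E}_\rho=\{z\in\mathbb{C}:|z-1|+|z+1|<\rho+\rho^{-1}\}$ is the open Bernstein ellipse. *)

theory Defs
  imports "HOL-Complex_Analysis.Complex_Analysis"
begin

definition cheb_pt :: "nat \<Rightarrow> nat \<Rightarrow> real" where
  "cheb_pt K k = cos (pi * real k / real K)"

definition cheb_interp :: "nat \<Rightarrow> (real \<Rightarrow> complex) \<Rightarrow> real \<Rightarrow> complex" where
  "cheb_interp K f t =
     (\<Sum>k\<le>K. f (cheb_pt K k) *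
        of_real (\<Prod>j\<in>{..K} - {k}. (t - cheb_pt K j) / (cheb_pt K k - cheb_pt K j)))"

definition C0norm :: "(real \<Rightarrow> complex) \<Rightarrow> real" where
  "C0norm f = (SUP t\<in>{-1..1}. norm (f t))"

definition deriv_chain :: "nat \<Rightarrow> (nat \<Rightarrow> real \<Rightarrow> complex) \<Rightarrow> (real \<Rightarrow> complex) \<Rightarrow> bool" where
  "deriv_chain m g f \<longleftrightarrow> g 0 = f \<and>
     (\<forall>i<m. \<forall>t\<in>{-1..1}. (g i has_vector_derivative g (Suc i) t) (at t within {-1..1}))"

definition bernstein_ellipse :: "real \<Rightarrow> complex set" where
  "bernstein_ellipse \<rho> = {z. cmod (z - 1) + cmod (z + 1) < \<rho> + inverse \<rho>}"

definition zeta :: "real \<Rightarrow> real" where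
  "zeta x = (if x = 0 then 1 else (exp x - 1) / x)"

end

theory Submission
  imports Defs
begin

(*
  Smooth case: u solves u' = \<tau>\<lambda> u + \<tau>\<phi>, so u^(q+1) = (\<tau>\<lambda>)^(q+1) u + \<tau> \<Sum>_{i\<le>q} (\<tau>\<lambda>)^i \<phi>^(q-i),
  while |u(t)| \<le> \<tau> \<integral>_{-1}^t exp(\<tau>(t-s) Re \<lambda>) |\<phi>(s)| ds \<le> 2\<tau> \<zeta>(2\<tau> Re \<lambda>) \<parallel>\<phi>\<parallel>.  The assumed
  interpolation estimate then gives the first bound; applied to the node polynomial, which is its
  own interpolation error, it also shows \<sigma> \<ge> 0.

  Analytic case: on the Chebyshev points T_k coincides with some T_k' with k' \<le> K (aliasing), so
  the interpolation error of \<Sum> a_k T_k is at most 2 \<Sum>_{k>K} |a_k|.  If U is bounded by M on E_\<rho>,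
  then U((w + 1/w)/2) is holomorphic on the annulus 1/\<rho> < |w| < \<rho>, its Laurent coefficients on
  the unit circle give the Chebyshev coefficients of U, and the Cauchy estimates on the circles of
  radii r and 1/r give |a_k| \<le> 2M/r ^ k for every r < \<rho>; hence the error is at most 4M/(\<rho>^K(\<rho>-1)).
  Finally u extends to E_\<rho> as \<tau> exp(\<tau>z\<lambda>) \<integral>_{-1}^z exp(-\<tau>s\<lambda>) F(s) ds, integrated along the
  segment, which is at most \<tau> |z+1| \<zeta>(\<tau> Re((z+1)\<lambda>)) sup |F|; on E_\<rho>, |z+1| \<le> (\<rho>+1/\<rho>+2)/2 and
  Re(z\<lambda>) is at most the support function of the ellipse in direction \<lambda>.
*)

section \<open>Sup norm and the function \<open>zeta\<close>\<close>

lemma norm_le_C0norm: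
  assumes "continuous_on {-1..1} f" "t \<in> {-1..1}"
  shows "norm (f t) \<le> C0norm f"
proof -
  have "compact ((\<lambda>t. norm (f t)) ` {-1..1})"
    by (intro compact_continuous_image continuous_intros assms(1)) auto
  then have "bdd_above ((\<lambda>t. norm (f t)) ` {-1..1})"
    by (meson bounded_imp_bdd_above compact_imp_bounded)
  then show ?thesis unfolding C0norm_def by (rule cSUP_upper[OF assms(2)])
qed

lemma C0norm_le:
  assumes "\<And>t. t \<in> {-1..1} \<Longrightarrow> norm (f t) \<le> B"
  shows "C0norm f \<le> B"
  unfolding C0norm_def by (rule cSUP_least) (use assms in auto)

lemma C0norm_nonneg: "continuous_on {-1..1} f \<Longrightarrow> 0 \<le> C0norm f"
  using norm_le_C0norm[of f 0] by (meson atLeastAtMost_iff norm_ge_zero order_trans neg_le_0_iff_le zero_le_one)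

lemma zeta_pos: "0 < zeta x"
  unfolding zeta_def by (auto simp: zero_less_divide_iff)

lemma mult_zeta_mult: "x * zeta (c * x) = (if c = 0 then x else (exp (c * x) - 1) / c)"
  by (auto simp: zeta_def)

lemma has_integral_exp_zeta:
  fixes a b c :: real
  assumes "a \<le> b"
  shows "((\<lambda>s. exp (c * (b - s))) has_integral (b - a) * zeta (c * (b - a))) {a..b}"
proof (cases "c = 0")
  case True
  then show ?thesis using has_integral_const_real[of "1::real" a b] assms by (simp add: zeta_def)
next
  case False
  let ?G = "\<lambda>s. - exp (c * (b - s)) / c"
  have "((\<lambda>s. exp (c * (b - s))) has_integral (?G b - ?G a)) {a..b}"
  proof (rule fundamental_theorem_of_calculus[OF assms])
    fix s assume "s \<in> {a..b}"
    show "(?G has_vector_derivative exp (c * (b - s))) (at s within {a..b})"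
      unfolding has_real_derivative_iff_has_vector_derivative[symmetric]
      using False by (auto intro!: derivative_eq_intros simp: field_simps)
  qed
  then show ?thesis using False by (simp add: mult_zeta_mult[of "b - a"] mult.commute diff_divide_distrib)
qed

lemma zeta_mono:
  assumes "x \<le> y"
  shows "zeta x \<le> zeta y"
proof (rule has_integral_le)
  show "((\<lambda>s. exp (x * (1 - s))) has_integral zeta x) {0..1}"
    using has_integral_exp_zeta[of 0 1 x] by simp
  show "((\<lambda>s. exp (y * (1 - s))) has_integral zeta y) {0..1}"
    using has_integral_exp_zeta[of 0 1 y] by simp
  show "exp (x * (1 - s)) \<le> exp (y * (1 - s))" if "s \<in> {0..1}" for s
    using that assms by (simp add: mult_right_mono)
qed

lemma mult_zeta_mult_mono:
  assumes "x \<le> y"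
  shows "x * zeta (c * x) \<le> y * zeta (c * y)"
proof (cases c "0::real" rule: linorder_cases)
  case less
  then have "exp (c * y) \<le> exp (c * x)" using assms by (simp add: mult_left_mono_neg)
  with less show ?thesis unfolding mult_zeta_mult by (simp add: divide_right_mono_neg)
next
  case greater
  then have "exp (c * x) \<le> exp (c * y)" using assms by (simp add: mult_left_mono)
  with greater show ?thesis unfolding mult_zeta_mult by (simp add: divide_right_mono)
qed (use assms in \<open>simp add: zeta_def\<close>)

section \<open>The exponential convolution and its derivatives\<close>

definition exp_convolution :: "real \<Rightarrow> complex \<Rightarrow> (real \<Rightarrow> complex) \<Rightarrow> real \<Rightarrow> complex" where
  "exp_convolution \<tau> lam \<phi> t =
     of_real \<tau> * integral {-1..t} (\<lambda>s. exp (of_real (\<tau> * (t - s)) * lam) * \<phi> s)"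

lemma exp_convolution_factor:
  "exp_convolution \<tau> lam \<phi> t =
     of_real \<tau> * (exp (of_real (\<tau> * t) * lam) * integral {-1..t} (\<lambda>s. exp (- (of_real (\<tau> * s) * lam)) * \<phi> s))"
proof -
  have "exp (of_real (\<tau> * (t - s)) * lam) = exp (of_real (\<tau> * t) * lam) * exp (- (of_real (\<tau> * s) * lam))" for s
    by (subst exp_add[symmetric]) (simp add: algebra_simps)
  then show ?thesis
    by (simp add: exp_convolution_def mult.assoc Henstock_Kurzweil_Integration.integral_mult_right)
qed

lemma norm_exp_convolution_le:
  assumes tau: "\<tau> > 0" and cont: "continuous_on {-1..1} \<phi>" and t: "t \<in> {-1..1}"
  shows "norm (exp_convolution \<tau> lam \<phi> t) \<le> 2 * \<tau> * zeta (2 * \<tau> * Re lam) * C0norm \<phi>"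
proof -
  let ?c = "\<tau> * Re lam" and ?N = "C0norm \<phi>"
  have sub: "{-1..t} \<subseteq> {-1..1}" using t by auto
  have hi: "((\<lambda>s. exp (?c * (t - s)) * ?N) has_integral (t + 1) * zeta (?c * (t + 1)) * ?N) {-1..t}"
    using has_integral_exp_zeta[of "-1" t ?c] t by (intro has_integral_mult_left) auto
  have "norm (integral {-1..t} (\<lambda>s. exp (of_real (\<tau> * (t - s)) * lam) * \<phi> s))
        \<le> integral {-1..t} (\<lambda>s. exp (?c * (t - s)) * ?N)"
  proof (rule integral_norm_bound_integral)
    show "(\<lambda>s. exp (of_real (\<tau> * (t - s)) * lam) * \<phi> s) integrable_on {-1..t}"
      by (intro integrable_continuous_interval continuous_intros continuous_on_subset[OF cont sub])
    show "(\<lambda>s. exp (?c * (t - s)) * ?N) integrable_on {-1..t}" using hi by blast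
    fix s assume "s \<in> {-1..t}"
    then have "norm (\<phi> s) \<le> ?N" using norm_le_C0norm[OF cont] sub by auto
    then show "norm (exp (of_real (\<tau> * (t - s)) * lam) * \<phi> s) \<le> exp (?c * (t - s)) * ?N"
      by (simp add: norm_mult norm_exp_eq_Re mult_left_mono mult_ac)
  qed
  also have "\<dots> = (t + 1) * zeta (?c * (t + 1)) * ?N" using integral_unique[OF hi] .
  finally have "norm (exp_convolution \<tau> lam \<phi> t) \<le> \<tau> * (t + 1) * zeta (Re lam * (\<tau> * (t + 1))) * ?N"
    using tau by (simp add: exp_convolution_def norm_mult mult_left_mono mult_ac)
  also have "\<dots> \<le> 2 * \<tau> * zeta (Re lam * (2 * \<tau>)) * ?N"
    using mult_zeta_mult_mono[of "\<tau> * (t + 1)" "2 * \<tau>" "Re lam"] t tau C0norm_nonneg[OF cont]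
    by (intro mult_right_mono) (auto simp: mult_ac)
  finally show ?thesis by (simp add: mult_ac)
qed

lemma exp_convolution_has_vector_derivative:
  assumes cont: "continuous_on {-1..1} \<phi>" and t: "t \<in> {-1..1}"
  shows "(exp_convolution \<tau> lam \<phi> has_vector_derivative
           of_real \<tau> * lam * exp_convolution \<tau> lam \<phi> t + of_real \<tau> * \<phi> t) (at t within {-1..1})"
proof -
  define k where "k = (\<lambda>s. exp (- (of_real (\<tau> * s) * lam)) * \<phi> s)"
  define e where "e = (\<lambda>t. exp (of_real (\<tau> * t) * lam))"
  have eq: "exp_convolution \<tau> lam \<phi> = (\<lambda>t. of_real \<tau> * (e t * integral {-1..t} k))"
    unfolding e_def k_def by (rule ext) (rule exp_convolution_factor)
  have dI: "((\<lambda>t. integral {-1..t} k) has_vector_derivative k t) (at t within {-1..1})"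
    unfolding k_def by (intro integral_has_vector_derivative continuous_intros cont t)
  have "((\<lambda>t. of_real (\<tau> * t) * lam) has_vector_derivative of_real \<tau> * lam) (at t within {-1..1})"
    by (intro has_vector_derivative_mult_left has_vector_derivative_of_real derivative_eq_intros) auto
  then have de: "(e has_vector_derivative (of_real \<tau> * lam) * e t) (at t within {-1..1})"
    unfolding e_def by (rule field_vector_diff_chain_within[where g = exp, unfolded o_def])
      (auto intro: has_field_derivative_at_within DERIV_exp)
  have "((\<lambda>t. of_real \<tau> * (e t * integral {-1..t} k)) has_vector_derivative
          of_real \<tau> * (e t * k t + (of_real \<tau> * lam) * e t * integral {-1..t} k)) (at t within {-1..1})"
    by (intro has_vector_derivative_mult_right has_vector_derivative_mult dI de)
  moreover have "e t * k t = \<phi> t"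
    unfolding e_def k_def by (simp add: exp_minus field_simps)
  ultimately show ?thesis unfolding eq by (simp add: algebra_simps)
qed

fun exp_convolution_derivs :: "real \<Rightarrow> complex \<Rightarrow> (nat \<Rightarrow> real \<Rightarrow> complex) \<Rightarrow> nat \<Rightarrow> real \<Rightarrow> complex" where
  "exp_convolution_derivs \<tau> lam D 0 = exp_convolution \<tau> lam (D 0)"
| "exp_convolution_derivs \<tau> lam D (Suc i) =
     (\<lambda>t. of_real \<tau> * lam * exp_convolution_derivs \<tau> lam D i t + of_real \<tau> * D i t)"

lemma exp_convolution_derivs_eq:
  "exp_convolution_derivs \<tau> lam D n t =
     (of_real \<tau> * lam) ^ n * exp_convolution \<tau> lam (D 0) t
     + of_real \<tau> * (\<Sum>i<n. (of_real \<tau> * lam) ^ i * D (n - 1 - i) t)"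
proof (induction n)
  case (Suc n)
  have "(\<Sum>i<Suc n. (of_real \<tau> * lam) ^ i * D (Suc n - 1 - i) t)
       = D n t + (of_real \<tau> * lam) * (\<Sum>i<n. (of_real \<tau> * lam) ^ i * D (n - 1 - i) t)"
    by (simp only: sum.lessThan_Suc_shift) (simp add: sum_distrib_left mult.assoc)
  then show ?case using Suc by (simp add: algebra_simps)
qed simp

lemma exp_convolution_derivs_has_vector_derivative:
  assumes D: "\<And>i t. t \<in> {-1..1} \<Longrightarrow> (D i has_vector_derivative D (Suc i) t) (at t within {-1..1})"
    and t: "t \<in> {-1..1}"
  shows "(exp_convolution_derivs \<tau> lam D i has_vector_derivative exp_convolution_derivs \<tau> lam D (Suc i) t)
           (at t within {-1..1})"
  using t
proof (induction i arbitrary: t)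
  case 0
  have "continuous_on {-1..1} (D 0)" using D by (rule continuous_on_vector_derivative)
  then show ?case using exp_convolution_has_vector_derivative[OF _ 0] by simp
next
  case (Suc i)
  have "((\<lambda>t. of_real \<tau> * lam * exp_convolution_derivs \<tau> lam D i t + of_real \<tau> * D i t) has_vector_derivative
          of_real \<tau> * lam * exp_convolution_derivs \<tau> lam D (Suc i) t + of_real \<tau> * D (Suc i) t)
          (at t within {-1..1})"
    by (intro has_vector_derivative_add has_vector_derivative_mult_right Suc.IH Suc.prems D)
  then show ?case by simp
qed

lemma C0norm_exp_convolution_derivs_le:
  assumes tau: "\<tau> > 0"
    and D: "\<And>i t. t \<in> {-1..1} \<Longrightarrow> (D i has_vector_derivative D (Suc i) t) (at t within {-1..1})"
  shows "C0norm (exp_convolution_derivs \<tau> lam D (Suc q))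
           \<le> cmod (of_real \<tau> * lam) ^ (q + 1) * (2 * \<tau> * zeta (2 * \<tau> * Re lam)) * C0norm (D 0)
             + \<tau> * (\<Sum>i\<le>q. cmod (of_real \<tau> * lam) ^ i * C0norm (D (q - i)))" (is "_ \<le> ?B")
proof (rule C0norm_le)
  fix t :: real assume t: "t \<in> {-1..1}"
  have contD: "continuous_on {-1..1} (D j)" for j using D by (rule continuous_on_vector_derivative)
  have eq: "exp_convolution_derivs \<tau> lam D (Suc q) t =
          (of_real \<tau> * lam) ^ Suc q * exp_convolution \<tau> lam (D 0) t
          + of_real \<tau> * (\<Sum>i\<le>q. (of_real \<tau> * lam) ^ i * D (q - i) t)"
    by (simp only: exp_convolution_derivs_eq lessThan_Suc_atMost) simp
  have bound1: "norm ((of_real \<tau> * lam) ^ Suc q * exp_convolution \<tau> lam (D 0) t)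
        \<le> cmod (of_real \<tau> * lam) ^ (q + 1) * (2 * \<tau> * zeta (2 * \<tau> * Re lam)) * C0norm (D 0)"
    unfolding norm_mult norm_power mult.assoc[of _ "2 * \<tau> * _"]
    by (simp add: mult_left_mono norm_exp_convolution_le[OF tau contD t])
  have bound2: "norm (of_real \<tau> * (\<Sum>i\<le>q. (of_real \<tau> * lam) ^ i * D (q - i) t))
        \<le> \<tau> * (\<Sum>i\<le>q. cmod (of_real \<tau> * lam) ^ i * C0norm (D (q - i)))"
  proof -
    have "norm (\<Sum>i\<le>q. (of_real \<tau> * lam) ^ i * D (q - i) t)
          \<le> (\<Sum>i\<le>q. cmod (of_real \<tau> * lam) ^ i * C0norm (D (q - i)))"
      by (rule order_trans[OF norm_sum sum_mono])
         (simp add: norm_mult norm_power mult_left_mono norm_le_C0norm[OF contD t])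
    then show ?thesis using tau by (simp add: norm_mult mult_left_mono)
  qed
  show "norm (exp_convolution_derivs \<tau> lam D (Suc q) t) \<le> ?B"
    unfolding eq by (rule order_trans[OF norm_triangle_ineq add_mono[OF bound1 bound2]])
qed

lemma interp_error_constant_nonneg:
  fixes \<sigma> :: real
  assumes sigma: "\<And>f g. deriv_chain (Suc q) g f \<Longrightarrow> continuous_on {-1..1} (g (Suc q)) \<Longrightarrow>
                   C0norm (\<lambda>t. f t - cheb_interp K f t) \<le> \<sigma> * C0norm (g (Suc q))"
  shows "0 \<le> \<sigma>"
proof -
  define p :: "real poly" where "p = (\<Prod>k\<le>K. [:- cheb_pt K k, 1:])"
  define f where "f = (\<lambda>t. complex_of_real (poly p t))"
  define g where "g = (\<lambda>i t. complex_of_real (poly ((pderiv ^^ i) p) t))"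
  have dg: "(g i has_vector_derivative g (Suc i) t) (at t within {-1..1})" for i t
    unfolding g_def by (auto intro!: has_vector_derivative_of_real has_field_derivative_at_within poly_DERIV)
  then have chain: "deriv_chain (Suc q) g f"
    by (simp add: deriv_chain_def f_def g_def)
  have contg: "continuous_on {-1..1} (g (Suc q))"
    using dg by (rule continuous_on_vector_derivative)
  have "f (cheb_pt K k) = 0" if "k \<le> K" for k
    unfolding f_def p_def using that by (auto simp: poly_prod)
  then have err: "(\<lambda>t. f t - cheb_interp K f t) = f"
    by (simp add: cheb_interp_def)
  have "infinite ({-1..1::real} - cheb_pt K ` {..K})"
    by (rule Diff_infinite_finite) auto
  then obtain t0 where t0: "t0 \<in> {-1..1}" "t0 \<notin> cheb_pt K ` {..K}"
    by (metis Diff_iff finite.emptyI infinite_imp_nonempty ex_in_conv)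
  then have "0 < norm (f t0)" by (auto simp: f_def p_def poly_prod prod_zero_iff)
  also have "\<dots> \<le> C0norm f"
    by (rule norm_le_C0norm[OF _ t0(1)]) (auto simp: f_def intro!: continuous_intros)
  also have "\<dots> \<le> \<sigma> * C0norm (g (Suc q))" using sigma[OF chain contg] by (simp only: err)
  finally show ?thesis using C0norm_nonneg[OF contg] by (simp add: zero_less_mult_iff)
qed

lemma exp_convolution_interp_error_le_smooth:
  fixes \<sigma> \<tau> :: real and lam :: complex
  assumes tau: "\<tau> > 0"
    and D: "\<And>i t. t \<in> {-1..1} \<Longrightarrow> (D i has_vector_derivative D (Suc i) t) (at t within {-1..1})"
    and sigma: "\<And>f g. deriv_chain (Suc q) g f \<Longrightarrow> continuous_on {-1..1} (g (Suc q)) \<Longrightarrow>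
                   C0norm (\<lambda>t. f t - cheb_interp K f t) \<le> \<sigma> * C0norm (g (Suc q))"
  defines "u \<equiv> exp_convolution \<tau> lam (D 0)"
  shows "C0norm (\<lambda>t. u t - cheb_interp K u t)
           \<le> \<sigma> * (cmod (of_real \<tau> * lam) ^ (q + 1) * (2 * \<tau> * zeta (2 * \<tau> * Re lam)) * C0norm (D 0)
                  + \<tau> * (\<Sum>i\<le>q. cmod (of_real \<tau> * lam) ^ i * C0norm (D (q - i))))"
proof -
  let ?g = "exp_convolution_derivs \<tau> lam D"
  have dg: "\<And>i t. t \<in> {-1..1} \<Longrightarrow> (?g i has_vector_derivative ?g (Suc i) t) (at t within {-1..1})"
    using D by (rule exp_convolution_derivs_has_vector_derivative)
  then have "deriv_chain (Suc q) ?g u"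
    by (simp add: deriv_chain_def u_def)
  moreover have "continuous_on {-1..1} (?g (Suc q))"
    using dg by (rule continuous_on_vector_derivative)
  ultimately have "C0norm (\<lambda>t. u t - cheb_interp K u t) \<le> \<sigma> * C0norm (?g (Suc q))" by (rule sigma)
  also have "\<dots> \<le> \<sigma> * (cmod (of_real \<tau> * lam) ^ (q + 1) * (2 * \<tau> * zeta (2 * \<tau> * Re lam)) * C0norm (D 0)
                  + \<tau> * (\<Sum>i\<le>q. cmod (of_real \<tau> * lam) ^ i * C0norm (D (q - i))))"
  proof (rule mult_left_mono)
    show "0 \<le> \<sigma>" using sigma by (rule interp_error_constant_nonneg)
  qed (use tau D in \<open>rule C0norm_exp_convolution_derivs_le\<close>)
  finally show ?thesis .
qed

section \<open>Chebyshev polynomials and interpolation at the Chebyshev points\<close>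

fun chebyshev_poly :: "nat \<Rightarrow> real poly" where
  "chebyshev_poly 0 = 1"
| "chebyshev_poly (Suc 0) = [:0, 1:]"
| "chebyshev_poly (Suc (Suc n)) = smult 2 [:0, 1:] * chebyshev_poly (Suc n) - chebyshev_poly n"

lemma degree_chebyshev_poly_le: "degree (chebyshev_poly n) \<le> n"
proof (induction n rule: chebyshev_poly.induct)
  case (3 n)
  have "degree (smult 2 [:0, 1:] * chebyshev_poly (Suc n)) \<le> Suc (Suc n)"
    using degree_mult_le[of "smult 2 [:0, 1:]" "chebyshev_poly (Suc n)"] 3(1) by auto
  then show ?case using 3(2) by (simp add: degree_diff_le)
qed auto

lemma poly_chebyshev_poly_cos: "poly (chebyshev_poly n) (cos \<theta>) = cos (real n * \<theta>)"
proof (induction n rule: chebyshev_poly.induct)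
  case (3 n)
  have "cos (real (Suc (Suc n)) * \<theta>) + cos (real n * \<theta>) = 2 * cos \<theta> * cos (real (Suc n) * \<theta>)"
    using cos_add[of "real (Suc n) * \<theta>" \<theta>] cos_diff[of "real (Suc n) * \<theta>" \<theta>]
    by (simp add: algebra_simps)
  with 3 show ?case by (simp add: algebra_simps)
qed auto

lemma poly_chebyshev_poly_arccos:
  "x \<in> {-1..1} \<Longrightarrow> poly (chebyshev_poly n) x = cos (real n * arccos x)"
  using poly_chebyshev_poly_cos[of n "arccos x"] by (simp add: cos_arccos)

lemma abs_poly_chebyshev_poly_le: "x \<in> {-1..1} \<Longrightarrow> \<bar>poly (chebyshev_poly n) x\<bar> \<le> 1"
  by (simp add: poly_chebyshev_poly_arccos)

lemma cheb_pt_in_interval: "cheb_pt K k \<in> {-1..1}"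
  by (simp add: cheb_pt_def)

lemma inj_on_cheb_pt:
  assumes "K \<ge> 1"
  shows "inj_on (cheb_pt K) {..K}"
proof
  fix j k assume jk: "j \<in> {..K}" "k \<in> {..K}" "cheb_pt K j = cheb_pt K k"
  have le_pi: "pi * real i / real K \<le> pi" if "i \<le> K" for i
    using that assms by (simp add: divide_le_eq)
  have "cos (pi * real j / real K) = cos (pi * real k / real K)"
    using jk(3) unfolding cheb_pt_def .
  then have "pi * real j / real K = pi * real k / real K"
    by (rule cos_inj_pi[rotated 4]) (use le_pi jk in auto)
  then show "j = k" using assms by simp
qed

lemma lagrange_basis_at_node:
  fixes x :: "nat \<Rightarrow> 'a :: field"
  assumes "inj_on x {..K}" "i \<le> K" "k \<le> K"
  shows "(\<Prod>j\<in>{..K} - {k}. (x i - x j) / (x k - x j)) = (if i = k then 1 else 0)"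
proof (cases "i = k")
  case True
  have "x k \<noteq> x j" if "j \<in> {..K} - {k}" for j
    using that assms inj_onD by fastforce
  then show ?thesis using True by (auto intro: prod.neutral)
next
  case False
  have "(\<Prod>j\<in>{..K} - {k}. (x i - x j) / (x k - x j)) = 0"
    using False assms(2) by (intro prod_zero bexI[of _ i]) auto
  then show ?thesis using False by simp
qed

lemma cheb_interp_cong:
  assumes "\<And>k. k \<le> K \<Longrightarrow> f (cheb_pt K k) = g (cheb_pt K k)"
  shows "cheb_interp K f t = cheb_interp K g t"
  unfolding cheb_interp_def using assms by (intro sum.cong) auto

lemma cheb_interp_poly:
  fixes p :: "real poly"
  assumes K: "K \<ge> 1" and deg: "degree p \<le> K"
  shows "cheb_interp K (\<lambda>t. of_real (poly p t)) t = of_real (poly p t)"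
proof -
  let ?x = "cheb_pt K"
  define L where "L = (\<Sum>k\<le>K. smult (poly p (?x k))
       (\<Prod>j\<in>{..K} - {k}. smult (1 / (?x k - ?x j)) [:- ?x j, 1:]))"
  have poly_L: "poly L t = (\<Sum>k\<le>K. poly p (?x k) * (\<Prod>j\<in>{..K} - {k}. (t - ?x j) / (?x k - ?x j)))" for t
    unfolding L_def by (simp add: poly_sum poly_prod diff_divide_distrib)
  have "degree (\<Prod>j\<in>{..K} - {k}. smult (1 / (?x k - ?x j)) [:- ?x j, 1:]) \<le> K" if "k \<le> K" for k
  proof -
    have "degree (\<Prod>j\<in>{..K} - {k}. smult (1 / (?x k - ?x j)) [:- ?x j, 1:])
        \<le> (\<Sum>j\<in>{..K} - {k}. degree (smult (1 / (?x k - ?x j)) [:- ?x j, 1:]))"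
      using degree_prod_sum_le[of "{..K} - {k}" "\<lambda>j. smult (1 / (?x k - ?x j)) [:- ?x j, 1:]"]
      by (simp only: o_def finite_Diff finite_atMost)
    also have "\<dots> \<le> (\<Sum>j\<in>{..K} - {k}. 1)"
      by (intro sum_mono) (simp add: degree_smult_le)
    finally show ?thesis using that by simp
  qed
  then have "degree L \<le> K"
    unfolding L_def by (intro degree_sum_le) (auto intro: order_trans[OF degree_smult_le])
  moreover have "poly L x = poly p x" if "x \<in> ?x ` {..K}" for x
    using that K by (auto simp: poly_L lagrange_basis_at_node[OF inj_on_cheb_pt] if_distrib cong: if_cong)
  moreover have "card (?x ` {..K}) = K + 1"
    using inj_on_cheb_pt[OF K] by (simp add: card_image)
  ultimately have "L = p" using deg by (intro poly_eqI_degree[of "?x ` {..K}"]) auto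
  have "cheb_interp K (\<lambda>t. of_real (poly p t)) t = of_real (poly L t)"
    unfolding cheb_interp_def poly_L by (simp only: of_real_mult of_real_sum)
  with \<open>L = p\<close> show ?thesis by simp
qed

definition cheb_alias :: "nat \<Rightarrow> nat \<Rightarrow> nat" where
  "cheb_alias K k = (if k mod (2 * K) \<le> K then k mod (2 * K) else 2 * K - k mod (2 * K))"

lemma cheb_alias_le: "K \<ge> 1 \<Longrightarrow> cheb_alias K k \<le> K"
  unfolding cheb_alias_def by auto

lemma cheb_alias_eq_self: "k \<le> K \<Longrightarrow> cheb_alias K k = k"
  unfolding cheb_alias_def by (cases "K = 0") auto

lemma poly_chebyshev_poly_cheb_pt_alias:
  assumes K: "K \<ge> 1"
  shows "poly (chebyshev_poly k) (cheb_pt K j) = poly (chebyshev_poly (cheb_alias K k)) (cheb_pt K j)"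
proof -
  define \<theta> where "\<theta> = pi * real j / real K"
  define m where "m = k mod (2 * K)"
  have m: "m \<le> 2 * K" using K unfolding m_def by (simp add: less_imp_le)
  have "k = k div (2 * K) * (2 * K) + m" unfolding m_def by (rule div_mult_mod_eq[symmetric])
  then have "real k = real (k div (2 * K)) * (2 * real K) + real m"
    by (metis of_nat_add of_nat_mult of_nat_numeral)
  then have "real k * \<theta> - real m * \<theta> = 2 * real_of_int (int ((k div (2 * K)) * j)) * pi"
    using K unfolding \<theta>_def by (simp add: field_simps)
  then have km: "cos (real k * \<theta>) = cos (real m * \<theta>)"
    by (intro cos_eq_periodic_intro) blast
  have "real (2 * K - m) * \<theta> + real m * \<theta> = 2 * real_of_int (int j) * pi"
    using K m unfolding \<theta>_def by (simp add: of_nat_diff field_simps)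
  then have "cos (real (2 * K - m) * \<theta>) = cos (real m * \<theta>)"
    by (intro cos_eq_periodic_intro) blast
  with km show ?thesis
    unfolding cheb_pt_def cheb_alias_def poly_chebyshev_poly_cos \<theta>_def[symmetric] m_def[symmetric]
    by simp
qed

lemma cheb_interp_chebyshev_poly:
  assumes K: "K \<ge> 1"
  shows "cheb_interp K (\<lambda>t. of_real (poly (chebyshev_poly k) t)) t
           = of_real (poly (chebyshev_poly (cheb_alias K k)) t)"
proof -
  have "cheb_interp K (\<lambda>t. of_real (poly (chebyshev_poly k) t)) t
          = cheb_interp K (\<lambda>t. of_real (poly (chebyshev_poly (cheb_alias K k)) t)) t"
    by (intro cheb_interp_cong arg_cong[where f = of_real] poly_chebyshev_poly_cheb_pt_alias[OF K])
  also have "\<dots> = of_real (poly (chebyshev_poly (cheb_alias K k)) t)"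
    using degree_chebyshev_poly_le cheb_alias_le[OF K] order_trans
    by (intro cheb_interp_poly[OF K]) blast
  finally show ?thesis .
qed

lemma cheb_interp_sums:
  fixes f :: "real \<Rightarrow> complex" and a :: "nat \<Rightarrow> complex"
  assumes K: "K \<ge> 1"
    and f: "\<And>x. x \<in> {-1..1} \<Longrightarrow> (\<lambda>k. a k * of_real (poly (chebyshev_poly k) x)) sums f x"
  shows "(\<lambda>k. a k * of_real (poly (chebyshev_poly (cheb_alias K k)) t)) sums cheb_interp K f t"
proof -
  define c where "c = (\<lambda>j. complex_of_real (\<Prod>i\<in>{..K} - {j}. (t - cheb_pt K i) / (cheb_pt K j - cheb_pt K i)))"
  have "(\<lambda>k. \<Sum>j\<le>K. a k * of_real (poly (chebyshev_poly k) (cheb_pt K j)) * c j)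
          sums (\<Sum>j\<le>K. f (cheb_pt K j) * c j)"
    by (intro sums_sum sums_mult2 f cheb_pt_in_interval)
  moreover have "(\<Sum>j\<le>K. a k * of_real (poly (chebyshev_poly k) (cheb_pt K j)) * c j)
                  = a k * of_real (poly (chebyshev_poly (cheb_alias K k)) t)" for k
  proof -
    have "(\<Sum>j\<le>K. a k * of_real (poly (chebyshev_poly k) (cheb_pt K j)) * c j)
            = a k * cheb_interp K (\<lambda>t. of_real (poly (chebyshev_poly k) t)) t"
      unfolding cheb_interp_def c_def by (simp add: sum_distrib_left mult.assoc)
    then show ?thesis by (simp only: cheb_interp_chebyshev_poly[OF K])
  qed
  moreover have "(\<Sum>j\<le>K. f (cheb_pt K j) * c j) = cheb_interp K f t"
    unfolding cheb_interp_def c_def ..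
  ultimately show ?thesis by simp
qed

lemma cheb_interp_error_le_coeffs:
  fixes f :: "real \<Rightarrow> complex" and a :: "nat \<Rightarrow> complex"
  assumes K: "K \<ge> 1" and r: "r > 1" and M: "M \<ge> 0"
    and f: "\<And>x. x \<in> {-1..1} \<Longrightarrow> (\<lambda>k. a k * of_real (poly (chebyshev_poly k) x)) sums f x"
    and a: "\<And>k. k > K \<Longrightarrow> norm (a k) \<le> 2 * M / r ^ k"
    and t: "t \<in> {-1..1}"
  shows "norm (f t - cheb_interp K f t) \<le> 4 * M / (r ^ K * (r - 1))"
proof -
  define T where "T = (\<lambda>k. a k * (of_real (poly (chebyshev_poly k) t)
                                   - of_real (poly (chebyshev_poly (cheb_alias K k)) t)))"
  have T_sums: "T sums (f t - cheb_interp K f t)"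
    unfolding T_def right_diff_distrib by (intro sums_diff f t cheb_interp_sums K)
  define B where "B = (\<lambda>k. if k \<le> K then 0 else 4 * M * (1 / r) ^ k)"
  have norm_T: "norm (T k) \<le> B k" for k
  proof (cases "k \<le> K")
    case False
    have "norm (of_real (poly (chebyshev_poly k) t) :: complex) \<le> 1"
      and "norm (of_real (poly (chebyshev_poly (cheb_alias K k)) t) :: complex) \<le> 1"
      using abs_poly_chebyshev_poly_le[OF t] by simp_all
    then have "norm (of_real (poly (chebyshev_poly k) t)
                - of_real (poly (chebyshev_poly (cheb_alias K k)) t) :: complex) \<le> 2"
      using norm_triangle_ineq4 by (smt (verit))
    then have "norm (T k) \<le> (2 * M / r ^ k) * 2"
      unfolding T_def norm_mult using a[of k] False M r by (intro mult_mono) auto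
    also have "\<dots> = 4 * M * (1 / r) ^ k" by (simp add: power_one_over)
    finally show ?thesis using False by (simp add: B_def)
  qed (simp add: T_def B_def cheb_alias_eq_self)
  have "(\<lambda>i. 4 * M * (1 / r) ^ (K + 1) * (1 / r) ^ i) sums (4 * M * (1 / r) ^ (K + 1) * (1 / (1 - 1 / r)))"
    using r by (intro sums_mult geometric_sums) simp
  moreover have "(\<lambda>i. B (i + (K + 1))) = (\<lambda>i. 4 * M * (1 / r) ^ (K + 1) * (1 / r) ^ i)"
    by (simp add: B_def power_add mult_ac)
  ultimately have B_sums: "B sums (4 * M * (1 / r) ^ (K + 1) * (1 / (1 - 1 / r)))"
    using sums_zero_iff_shift[of "K + 1" B] by (simp add: B_def)
  have "norm (f t - cheb_interp K f t) \<le> suminf B"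
    using norm_suminf_le[OF norm_T sums_summable[OF B_sums]] sums_unique[OF T_sums] by simp
  also have "\<dots> = 4 * M * (1 / r) ^ (K + 1) * (1 / (1 - 1 / r))"
    using sums_unique[OF B_sums] by simp
  also have "\<dots> = 4 * M / (r ^ K * (r - 1))"
    using r by (simp add: field_simps power_one_over)
  finally show ?thesis .
qed

section \<open>Laurent expansion on an annulus\<close>

lemma contour_integral_circlepath_sums:
  fixes f :: "nat \<Rightarrow> complex \<Rightarrow> complex"
  assumes R: "R > 0" and cont: "\<And>k. continuous_on (sphere 0 R) (f k)"
    and bd: "\<And>k z. z \<in> sphere 0 R \<Longrightarrow> norm (f k z) \<le> Mk k" and sm: "summable Mk"
    and sF: "\<And>z. z \<in> sphere 0 R \<Longrightarrow> (\<lambda>k. f k z) sums F z"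
  shows "(\<lambda>k. contour_integral (circlepath 0 R) (f k)) sums contour_integral (circlepath 0 R) F"
proof -
  have pim: "path_image (circlepath 0 R) = sphere 0 R" using R by (simp add: path_image_circlepath_nonneg)
  have ul: "uniform_limit (sphere 0 R) (\<lambda>n z. \<Sum>i<n. f i z) (\<lambda>z. suminf (\<lambda>i. f i z)) sequentially"
    by (rule Weierstrass_m_test[OF bd sm])
  have int: "f k contour_integrable_on circlepath 0 R" for k
    using cont[of k] R by (intro contour_integrable_continuous_circlepath) simp
  have ints: "\<forall>\<^sub>F n in sequentially. (\<lambda>z. \<Sum>i<n. f i z) contour_integrable_on circlepath 0 R"
    by (intro always_eventually allI contour_integrable_sum int) simp
  have lim: "((\<lambda>n. contour_integral (circlepath 0 R) (\<lambda>z. \<Sum>i<n. f i z)) \<longlongrightarrow>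
              contour_integral (circlepath 0 R) (\<lambda>z. suminf (\<lambda>i. f i z))) sequentially"
    by (rule contour_integral_uniform_limit_circlepath(2)[OF ints ul _ R]) simp
  have eq1: "contour_integral (circlepath 0 R) (\<lambda>z. \<Sum>i<n. f i z) = (\<Sum>i<n. contour_integral (circlepath 0 R) (f i))" for n
    by (rule contour_integral_sum) (auto simp: int)
  have eq2: "contour_integral (circlepath 0 R) (\<lambda>z. suminf (\<lambda>i. f i z)) = contour_integral (circlepath 0 R) F"
  proof (rule contour_integral_eq)
    fix z assume "z \<in> path_image (circlepath 0 R)"
    then have "(\<lambda>k. f k z) sums F z" using sF pim R by (simp add: abs_of_pos)
    then show "suminf (\<lambda>i. f i z) = F z" by (rule sums_unique[symmetric])
  qed
  show ?thesis unfolding sums_def using lim unfolding eq1 eq2 .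
qed

lemma homotopic_loops_circlepath_annulus:
  assumes s: "0 < s1" "s1 \<le> s2" and S: "{z. s1 \<le> cmod z \<and> cmod z \<le> s2} \<subseteq> S"
  shows "homotopic_loops S (circlepath 0 s2) (circlepath 0 s1)"
proof (rule homotopic_loops_linear)
  fix t :: real
  define e where "e = exp (2 * of_real pi * \<i> * of_real t)"
  have e: "norm e = 1" by (simp add: e_def norm_exp_eq_Re)
  show "closed_segment (circlepath 0 s2 t) (circlepath 0 s1 t) \<subseteq> S"
  proof
    fix z assume "z \<in> closed_segment (circlepath 0 s2 t) (circlepath 0 s1 t)"
    then obtain u where u: "0 \<le> u" "u \<le> 1"
      and "z = (1 - u) *\<^sub>R (of_real s2 * e) + u *\<^sub>R (of_real s1 * e)"
      by (auto simp: closed_segment_def circlepath e_def)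
    then have "z = of_real ((1 - u) * s2 + u * s1) * e"
      by (simp add: scaleR_conv_of_real algebra_simps)
    then have "cmod z = \<bar>(1 - u) * s2 + u * s1\<bar> * norm e"
      by (simp only: norm_mult norm_of_real)
    then have "cmod z = (1 - u) * s2 + u * s1"
      using e u s by simp
    moreover have "(1 - u) * s1 \<le> (1 - u) * s2" "u * s1 \<le> u * s2"
      using u s by (simp_all add: mult_left_mono)
    ultimately show "z \<in> S" using S by (auto simp: algebra_simps)
  qed
qed auto

lemma Cauchy_integral_formula_annulus:
  fixes g :: "complex \<Rightarrow> complex"
  assumes s: "0 < s1" "s1 < cmod w" "cmod w < s2"
    and S: "open S" "{z. s1 \<le> cmod z \<and> cmod z \<le> s2} \<subseteq> S" and hol: "g holomorphic_on S"
  shows "contour_integral (circlepath 0 s2) (\<lambda>z. g z / (z - w))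
           - contour_integral (circlepath 0 s1) (\<lambda>z. g z / (z - w)) = 2 * pi * \<i> * g w"
proof -
  define h where "h = (\<lambda>z. if z = w then deriv g w else (g z - g w) / (z - w))"
  have "h holomorphic_on S" unfolding h_def using pole_lemma_open[OF hol S(1)] .
  moreover have "homotopic_loops S (circlepath 0 s2) (circlepath 0 s1)"
    using s S by (intro homotopic_loops_circlepath_annulus) auto
  ultimately have h_eq: "contour_integral (circlepath 0 s2) h = contour_integral (circlepath 0 s1) h"
    using S(1) by (intro Cauchy_theorem_homotopic_loops) auto
  have h_split: "contour_integral (circlepath 0 R) h
      = contour_integral (circlepath 0 R) (\<lambda>z. g z / (z - w)) - contour_integral (circlepath 0 R) (\<lambda>z. g w / (z - w))"
    if R: "R \<in> {s1, s2}" for R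
  proof -
    have R0: "R > 0" and sph: "sphere 0 R \<subseteq> S" using R s S by auto
    have nw: "z \<noteq> w" if "z \<in> sphere 0 R" for z using that R s by auto
    have "continuous_on (sphere 0 R) (\<lambda>z. g z / (z - w))" "continuous_on (sphere 0 R) (\<lambda>z. g w / (z - w))"
      using nw by (auto intro!: continuous_intros
                         continuous_on_subset[OF holomorphic_on_imp_continuous_on[OF hol] sph])
    then have "contour_integral (circlepath 0 R) (\<lambda>z. g z / (z - w) - g w / (z - w))
        = contour_integral (circlepath 0 R) (\<lambda>z. g z / (z - w)) - contour_integral (circlepath 0 R) (\<lambda>z. g w / (z - w))"
      using R0 by (intro contour_integral_diff contour_integrable_continuous_circlepath) auto
    moreover have "contour_integral (circlepath 0 R) h = contour_integral (circlepath 0 R) (\<lambda>z. g z / (z - w) - g w / (z - w))"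
      using nw R0 by (intro contour_integral_eq) (auto simp: h_def diff_divide_distrib path_image_circlepath_nonneg)
    ultimately show ?thesis by simp
  qed
  have "((\<lambda>z. g w / (z - w)) has_contour_integral 2 * pi * \<i> * g w) (circlepath 0 s2)"
    using Cauchy_integral_circlepath[of 0 s2 "\<lambda>_. g w" w] s by simp
  moreover have "((\<lambda>z. g w / (z - w)) has_contour_integral 0) (circlepath 0 s1)"
    using s by (intro Cauchy_theorem_convex_simple[of _ "ball 0 (cmod w)"])
               (auto intro!: holomorphic_intros simp: path_image_circlepath_nonneg)
  ultimately show ?thesis
    using h_eq h_split[of s1] h_split[of s2] by (simp add: contour_integral_unique algebra_simps)
qed

lemma sums_cauchy_kernel:
  fixes w z :: complex
  assumes "cmod w < cmod z"
  shows "(\<lambda>k. w ^ k / z ^ Suc k) sums (1 / (z - w))"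
proof -
  have z: "z \<noteq> 0" and "z \<noteq> w" using assms by auto
  have "norm (w / z) < 1" using assms z by (simp add: norm_divide divide_less_eq_1)
  from sums_mult[OF geometric_sums[OF this], of "1 / z"]
  show ?thesis using z \<open>z \<noteq> w\<close> by (simp add: power_divide field_simps)
qed

lemma sums_contour_integral_cauchy_kernel_outside:
  fixes g :: "complex \<Rightarrow> complex"
  assumes R: "R > 0" and w: "cmod w < R" and contg: "continuous_on (sphere 0 R) g"
    and bd: "\<And>z. z \<in> sphere 0 R \<Longrightarrow> norm (g z) \<le> M"
  shows "(\<lambda>k. w ^ k * contour_integral (circlepath 0 R) (\<lambda>z. g z / z ^ Suc k))
           sums contour_integral (circlepath 0 R) (\<lambda>z. g z / (z - w))"
proof -
  have "continuous_on (sphere 0 R) (\<lambda>z. g z / z ^ Suc k)" for k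
    using R by (intro continuous_intros contg) auto
  then have int: "(\<lambda>z. g z / z ^ Suc k) contour_integrable_on circlepath 0 R" for k
    using R by (intro contour_integrable_continuous_circlepath) simp
  have "(\<lambda>k. contour_integral (circlepath 0 R) (\<lambda>z. w ^ k * (g z / z ^ Suc k)))
          sums contour_integral (circlepath 0 R) (\<lambda>z. g z / (z - w))"
  proof (rule contour_integral_circlepath_sums[OF R, where Mk = "\<lambda>k. M / R * (cmod w / R) ^ k"])
    show "continuous_on (sphere 0 R) (\<lambda>z. w ^ k * (g z / z ^ Suc k))" for k
      using R by (intro continuous_intros contg) auto
    show "norm (w ^ k * (g z / z ^ Suc k)) \<le> M / R * (cmod w / R) ^ k" if z: "z \<in> sphere 0 R" for k z
    proof -
      have "norm (w ^ k * (g z / z ^ Suc k)) = cmod w ^ k * norm (g z) / R ^ Suc k"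
        using z by (simp add: norm_mult norm_divide norm_power)
      also have "\<dots> \<le> cmod w ^ k * M / R ^ Suc k"
        using bd[OF z] R by (intro divide_right_mono mult_left_mono) auto
      also have "\<dots> = M / R * (cmod w / R) ^ k"
        using R by (simp add: power_divide field_simps)
      finally show ?thesis .
    qed
    show "summable (\<lambda>k. M / R * (cmod w / R) ^ k)"
      using w R by (intro summable_mult summable_geometric) simp
    show "(\<lambda>k. w ^ k * (g z / z ^ Suc k)) sums (g z / (z - w))" if "z \<in> sphere 0 R" for z
      using sums_mult[OF sums_cauchy_kernel[of w z], of "g z"] that w by (simp add: mult_ac)
  qed
  then show ?thesis by (simp only: contour_integral_lmul[OF int])
qed

lemma sums_contour_integral_cauchy_kernel_inside:
  fixes g :: "complex \<Rightarrow> complex"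
  assumes R: "R > 0" and w: "R < cmod w" and contg: "continuous_on (sphere 0 R) g"
    and bd: "\<And>z. z \<in> sphere 0 R \<Longrightarrow> norm (g z) \<le> M"
  shows "(\<lambda>k. contour_integral (circlepath 0 R) (\<lambda>z. g z * z ^ k) * (1 / w ^ Suc k))
           sums (- contour_integral (circlepath 0 R) (\<lambda>z. g z / (z - w)))"
proof -
  have int: "(\<lambda>z. g z * z ^ k) contour_integrable_on circlepath 0 R" for k
    using R contg by (intro contour_integrable_continuous_circlepath continuous_intros) auto
  have "(\<lambda>k. contour_integral (circlepath 0 R) (\<lambda>z. g z * z ^ k * (1 / w ^ Suc k)))
          sums contour_integral (circlepath 0 R) (\<lambda>z. - (g z / (z - w)))"
  proof (rule contour_integral_circlepath_sums[OF R, where Mk = "\<lambda>k. M / cmod w * (R / cmod w) ^ k"])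
    show "continuous_on (sphere 0 R) (\<lambda>z. g z * z ^ k * (1 / w ^ Suc k))" for k
      by (intro continuous_intros contg)
    show "norm (g z * z ^ k * (1 / w ^ Suc k)) \<le> M / cmod w * (R / cmod w) ^ k" if z: "z \<in> sphere 0 R" for k z
    proof -
      have "norm (g z * z ^ k * (1 / w ^ Suc k)) = norm (g z) * R ^ k / cmod w ^ Suc k"
        using z by (simp add: norm_mult norm_divide norm_power)
      also have "\<dots> \<le> M * R ^ k / cmod w ^ Suc k"
        using bd[OF z] R by (intro divide_right_mono mult_right_mono) auto
      also have "\<dots> = M / cmod w * (R / cmod w) ^ k"
        using R w by (simp add: power_divide field_simps)
      finally show ?thesis .
    qed
    show "summable (\<lambda>k. M / cmod w * (R / cmod w) ^ k)"
      using w R by (intro summable_mult summable_geometric) (simp add: divide_less_eq_1)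
    show "(\<lambda>k. g z * z ^ k * (1 / w ^ Suc k)) sums (- (g z / (z - w)))" if "z \<in> sphere 0 R" for z
      using sums_mult[OF sums_cauchy_kernel[of z w], of "g z"] that w
      by (simp add: minus_divide_right mult_ac)
  qed
  then show ?thesis by (simp only: contour_integral_rmul[OF int] contour_integral_neg)
qed

lemma norm_contour_integral_div_power_le:
  fixes g :: "complex \<Rightarrow> complex"
  assumes R: "R > 0" and contg: "continuous_on (sphere 0 R) g"
    and bd: "\<And>z. z \<in> sphere 0 R \<Longrightarrow> norm (g z) \<le> M" and M: "M \<ge> 0"
  shows "norm (contour_integral (circlepath 0 R) (\<lambda>z. g z / z ^ Suc k)) \<le> 2 * pi * M / R ^ k"
proof -
  have nz: "z \<noteq> 0" if "z \<in> sphere 0 R" for z using that R by auto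
  have contk: "continuous_on (sphere 0 R) (\<lambda>z. g z / z ^ Suc k)"
    using nz by (intro continuous_intros contg) auto
  have intk: "(\<lambda>z. g z / z ^ Suc k) contour_integrable_on circlepath 0 R"
    by (rule contour_integrable_continuous_circlepath) (use contk R in \<open>simp add: abs_of_pos\<close>)
  have "norm (contour_integral (circlepath 0 R) (\<lambda>z. g z / z ^ Suc k)) \<le> M / R ^ Suc k * (2 * pi * R)"
  proof (rule has_contour_integral_bound_circlepath[OF has_contour_integral_integral[OF intk]])
    show "0 \<le> M / R ^ Suc k" using M R by simp
    show "norm (g x / x ^ Suc k) \<le> M / R ^ Suc k" if "norm (x - 0) = R" for x
    proof -
      have "x \<in> sphere 0 R" using that by simp
      then show ?thesis using bd[of x] that R by (simp add: norm_divide norm_mult norm_power divide_right_mono)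
    qed
  qed (use R in auto)
  also have "\<dots> = 2 * pi * M / R ^ k" using R by (simp add: field_simps)
  finally show ?thesis .
qed

lemma norm_contour_integral_mult_power_le:
  fixes g :: "complex \<Rightarrow> complex"
  assumes R: "R > 0" and contg: "continuous_on (sphere 0 R) g"
    and bd: "\<And>z. z \<in> sphere 0 R \<Longrightarrow> norm (g z) \<le> M" and M: "M \<ge> 0"
  shows "norm (contour_integral (circlepath 0 R) (\<lambda>z. g z * z ^ k)) \<le> 2 * pi * M * R ^ Suc k"
proof -
  have contk: "continuous_on (sphere 0 R) (\<lambda>z. g z * z ^ k)"
    by (intro continuous_intros contg)
  have intk: "(\<lambda>z. g z * z ^ k) contour_integrable_on circlepath 0 R"
    by (rule contour_integrable_continuous_circlepath) (use contk R in \<open>simp add: abs_of_pos\<close>)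
  have "norm (contour_integral (circlepath 0 R) (\<lambda>z. g z * z ^ k)) \<le> M * R ^ k * (2 * pi * R)"
  proof (rule has_contour_integral_bound_circlepath[OF has_contour_integral_integral[OF intk]])
    show "0 \<le> M * R ^ k" using M R by simp
    show "norm (g x * x ^ k) \<le> M * R ^ k" if "norm (x - 0) = R" for x
    proof -
      have "x \<in> sphere 0 R" using that by simp
      then show ?thesis using bd[of x] that R by (simp add: norm_mult norm_power mult_right_mono)
    qed
  qed (use R in auto)
  also have "\<dots> = 2 * pi * M * R ^ Suc k" by (simp add: field_simps)
  finally show ?thesis .
qed

lemma laurent_expansion_unit_circle:
  fixes g :: "complex \<Rightarrow> complex"
  assumes r: "1 < r" and S: "open S" "{z. 1 / r \<le> cmod z \<and> cmod z \<le> r} \<subseteq> S"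
    and hol: "g holomorphic_on S"
    and bd: "\<And>z. 1 / r \<le> cmod z \<Longrightarrow> cmod z \<le> r \<Longrightarrow> norm (g z) \<le> M"
  obtains c d where "\<And>k. norm (c k) \<le> M / r ^ k" "\<And>k. norm (d k) \<le> M / r ^ Suc k"
    "\<And>w. cmod w = 1 \<Longrightarrow> (\<lambda>k. c k * w ^ k + d k / w ^ Suc k) sums g w"
proof -
  let ?ri = "1 / r"
  have rp: "r > 0" "?ri > 0" "?ri < 1" using r by auto
  have "norm (g 1) \<le> M" using r by (intro bd) auto
  then have M: "M \<ge> 0" using norm_ge_zero order_trans by blast
  have ri_le: "?ri \<le> r" using rp r by linarith
  have "sphere 0 R \<subseteq> {z. ?ri \<le> cmod z \<and> cmod z \<le> r}" if "R \<in> {?ri, r}" for R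
    using that ri_le by auto
  then have "sphere 0 R \<subseteq> S" if "R \<in> {?ri, r}" for R
    using that S(2) by blast
  then have cont: "continuous_on (sphere 0 R) g" if "R \<in> {?ri, r}" for R
    using that by (intro continuous_on_subset[OF holomorphic_on_imp_continuous_on[OF hol]]) auto
  have bd_r: "norm (g z) \<le> M" if "z \<in> sphere 0 R" "R \<in> {?ri, r}" for z R
    using that ri_le by (intro bd) auto
  define C where "C = (\<lambda>k. contour_integral (circlepath 0 r) (\<lambda>z. g z / z ^ Suc k))"
  define D where "D = (\<lambda>k. contour_integral (circlepath 0 ?ri) (\<lambda>z. g z * z ^ k))"
  show ?thesis
  proof
    have "norm (C k) \<le> 2 * pi * M / r ^ k" for k
      unfolding C_def using rp cont bd_r M by (intro norm_contour_integral_div_power_le) auto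
    then show "norm (C k / (2 * pi * \<i>)) \<le> M / r ^ k" for k
      using rp by (simp add: norm_divide norm_mult field_simps)
    have "norm (D k) \<le> 2 * pi * M * ?ri ^ Suc k" for k
      unfolding D_def using rp cont bd_r M by (intro norm_contour_integral_mult_power_le) auto
    then show "norm (D k / (2 * pi * \<i>)) \<le> M / r ^ Suc k" for k
      using rp by (simp add: norm_divide norm_mult power_one_over field_simps)
    fix w :: complex assume w: "cmod w = 1"
    let ?P = "contour_integral (circlepath 0 r) (\<lambda>z. g z / (z - w))"
    let ?Q = "contour_integral (circlepath 0 ?ri) (\<lambda>z. g z / (z - w))"
    have P: "(\<lambda>k. w ^ k * C k) sums ?P"
      unfolding C_def using w r cont bd_r by (intro sums_contour_integral_cauchy_kernel_outside) auto
    have Q: "(\<lambda>k. D k * (1 / w ^ Suc k)) sums (- ?Q)"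
      unfolding D_def using w rp cont bd_r by (intro sums_contour_integral_cauchy_kernel_inside) auto
    have "?P - ?Q = 2 * pi * \<i> * g w"
      using w rp r by (intro Cauchy_integral_formula_annulus[OF rp(2) _ _ S hol]) auto
    with sums_add[OF P Q] have "(\<lambda>k. w ^ k * C k + D k * (1 / w ^ Suc k)) sums (2 * pi * \<i> * g w)"
      by simp
    from sums_divide[OF this, of "2 * pi * \<i>"]
    show "(\<lambda>k. C k / (2 * pi * \<i>) * w ^ k + D k / (2 * pi * \<i>) / w ^ Suc k) sums g w"
      by (simp add: add_divide_distrib mult.commute)
  qed
qed

lemma cosine_expansion_of_symmetric:
  fixes g :: "complex \<Rightarrow> complex" and c d :: "nat \<Rightarrow> complex"
  assumes r: "1 < r" and c: "\<And>k. norm (c k) \<le> M / r ^ k"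
    and g: "\<And>w. cmod w = 1 \<Longrightarrow> (\<lambda>k. c k * w ^ k + d k / w ^ Suc k) sums g w"
    and sym: "\<And>\<theta>. g (cis (- \<theta>)) = g (cis \<theta>)"
  shows "(\<lambda>k. (c k + (if k = 0 then 0 else d (k - 1))) * of_real (cos (real k * \<theta>))) sums g (cis \<theta>)"
proof -
  have pw: "cis \<theta> ^ k + cis (- \<theta>) ^ k = of_real (2 * cos (real k * \<theta>))" for k
    unfolding Complex.DeMoivre by (simp add: complex_eq_iff)
  have pw_inv: "1 / cis \<theta> ^ k + 1 / cis (- \<theta>) ^ k = of_real (2 * cos (real k * \<theta>))" for k
    unfolding Complex.DeMoivre divide_inverse cis_inverse by (simp add: complex_eq_iff)
  have "(\<lambda>k. c k * (cis \<theta> ^ k + cis (- \<theta>) ^ k) + d k * (1 / cis \<theta> ^ Suc k + 1 / cis (- \<theta>) ^ Suc k))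
          sums (g (cis \<theta>) + g (cis (- \<theta>)))"
    by (rule sums_cong[THEN iffD1, OF _ sums_add[OF g g]]) (simp_all add: divide_inverse algebra_simps)
  then have "(\<lambda>k. 2 * (c k * of_real (cos (real k * \<theta>)) + d k * of_real (cos (real (Suc k) * \<theta>))))
               sums (2 * g (cis \<theta>))"
    unfolding pw pw_inv sym by (simp add: algebra_simps)
  then have sum: "(\<lambda>k. c k * of_real (cos (real k * \<theta>)) + d k * of_real (cos (real (Suc k) * \<theta>))) sums g (cis \<theta>)"
    by (subst (asm) sums_mult_iff) simp_all
  have geom: "summable (\<lambda>k. M * (1 / r) ^ k)" using r by (intro summable_mult summable_geometric) auto
  have "summable (\<lambda>k. c k * of_real (cos (real k * \<theta>)))"
  proof (rule summable_comparison_test'[OF geom])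
    have "norm (c k * of_real (cos (real k * \<theta>))) \<le> norm (c k)" for k
      by (simp add: norm_mult mult_left_le)
    from order_trans[OF this c]
    show "norm (c k * of_real (cos (real k * \<theta>))) \<le> M * (1 / r) ^ k" for k
      by (simp add: power_one_over)
  qed
  then obtain A where A: "(\<lambda>k. c k * of_real (cos (real k * \<theta>))) sums A" by (auto simp: summable_def)
  define e where "e = (\<lambda>k. (if k = 0 then 0 else d (k - 1)) * of_real (cos (real k * \<theta>)))"
  have "(\<lambda>k. e (Suc k)) sums (g (cis \<theta>) - A)"
    using sums_diff[OF sum A] by (simp add: e_def)
  then have "e sums (g (cis \<theta>) - A)" unfolding sums_Suc_iff by (simp add: e_def)
  from sums_add[OF A this] show ?thesis by (simp add: e_def algebra_simps)
qed

section \<open>The Bernstein ellipse and the Joukowski map\<close>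

lemma confocal_ellipse_through:
  fixes z :: complex
  defines "a \<equiv> (cmod (z - 1) + cmod (z + 1)) / 2"
  shows "1 \<le> a" "(Re z)\<^sup>2 \<le> a\<^sup>2" "a\<^sup>2 * (Im z)\<^sup>2 = (a\<^sup>2 - 1) * (a\<^sup>2 - (Re z)\<^sup>2)"
proof -
  define d1 where "d1 = cmod (z - 1)"
  define d2 where "d2 = cmod (z + 1)"
  define x where "x = Re z"
  define y where "y = Im z"
  have d1: "d1\<^sup>2 = (x - 1)\<^sup>2 + y\<^sup>2" and d2: "d2\<^sup>2 = (x + 1)\<^sup>2 + y\<^sup>2"
    unfolding d1_def d2_def x_def y_def by (simp_all add: cmod_power2)
  have "2 \<le> d1 + d2" "d2 - d1 \<le> 2" "d1 - d2 \<le> 2"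
    using norm_triangle_ineq4[of "z + 1" "z - 1"] norm_triangle_ineq[of "z - 1" 2] norm_triangle_ineq4[of "z + 1" 2]
    by (simp_all add: d1_def d2_def norm_minus_commute add.commute)
  then have dist_diff: "\<bar>d2 - d1\<bar> \<le> 2" by simp
  show a1: "1 \<le> a" using \<open>2 \<le> d1 + d2\<close> unfolding a_def d1_def d2_def by simp
  have a0: "a > 0" using a1 by simp
  have a: "a = (d1 + d2) / 2" unfolding a_def d1_def d2_def ..
  have "(d2 - d1) * (2 * a) = 4 * x"
    using d1 d2 unfolding a by (simp add: power2_eq_square algebra_simps)
  then have dd: "d2 - d1 = 2 * x / a" using a0 by (simp add: field_simps)
  have "d2 = (d1 + d2) / 2 + (d2 - d1) / 2" by (simp add: field_simps)
  then have d2a: "d2 = a + x / a" unfolding a[symmetric] dd by simp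
  have "\<bar>x\<bar> \<le> a"
    using dist_diff a0 unfolding dd by (simp add: abs_mult divide_le_eq)
  then show "(Re z)\<^sup>2 \<le> a\<^sup>2" unfolding x_def using a0 by (metis abs_le_square_iff abs_of_pos)
  have "a\<^sup>2 * y\<^sup>2 = a\<^sup>2 * ((a + x / a)\<^sup>2 - (x + 1)\<^sup>2)" using d2 d2a by simp
  also have "\<dots> = (a\<^sup>2 - 1) * (a\<^sup>2 - x\<^sup>2)" using a0 by (simp add: power2_eq_square field_simps)
  finally show "a\<^sup>2 * (Im z)\<^sup>2 = (a\<^sup>2 - 1) * (a\<^sup>2 - (Re z)\<^sup>2)" by (simp add: x_def y_def)
qed

lemma ellipse_inequality_of_focal_sum_less:
  fixes z :: complex
  assumes "cmod (z - 1) + cmod (z + 1) < 2 * A"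
  shows "(A\<^sup>2 - 1) * (Re z)\<^sup>2 + A\<^sup>2 * (Im z)\<^sup>2 \<le> A\<^sup>2 * (A\<^sup>2 - 1)"
proof -
  define a where "a = (cmod (z - 1) + cmod (z + 1)) / 2"
  note conf = confocal_ellipse_through[of z, folded a_def]
  have "a < A" using assms unfolding a_def by simp
  then have A2: "a\<^sup>2 \<le> A\<^sup>2" and A1: "0 \<le> A\<^sup>2 - 1"
    using conf(1) by (simp_all add: power_mono one_le_power)
  text \<open>Scale by \<open>a\<^sup>2\<close> and use the equation of the confocal ellipse through \<open>z\<close>.\<close>
  have "a\<^sup>2 * ((A\<^sup>2 - 1) * (Re z)\<^sup>2 + A\<^sup>2 * (Im z)\<^sup>2)
          = (A\<^sup>2 - 1) * a\<^sup>2 * (Re z)\<^sup>2 + A\<^sup>2 * (a\<^sup>2 * (Im z)\<^sup>2)"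
    by (simp add: algebra_simps)
  also have "\<dots> = (Re z)\<^sup>2 * (A\<^sup>2 - a\<^sup>2) + A\<^sup>2 * a\<^sup>2 * (a\<^sup>2 - 1)"
    unfolding conf(3) by (simp add: algebra_simps)
  also have "\<dots> \<le> a\<^sup>2 * (A\<^sup>2 - a\<^sup>2) + A\<^sup>2 * a\<^sup>2 * (a\<^sup>2 - 1)"
    using conf(2) A2 by (intro add_right_mono mult_right_mono) auto
  also have "\<dots> = a\<^sup>2 * (a\<^sup>2 * (A\<^sup>2 - 1))" by (simp add: algebra_simps)
  also have "\<dots> \<le> a\<^sup>2 * (A\<^sup>2 * (A\<^sup>2 - 1))"
    using A1 A2 by (intro mult_left_mono mult_right_mono) auto
  finally show ?thesis using conf(1) by (simp add: mult_le_cancel_left_pos)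
qed

lemma Re_mult_le_on_bernstein_ellipse:
  assumes \<rho>: "\<rho> > 1" and z: "z \<in> bernstein_ellipse \<rho>"
  shows "Re (z * lam) \<le> sqrt ((Re lam)\<^sup>2 * (\<rho> + inverse \<rho>)\<^sup>2 + (Im lam)\<^sup>2 * (\<rho> - inverse \<rho>)\<^sup>2) / 2"
proof -
  define A where "A = (\<rho> + inverse \<rho>) / 2"
  define B where "B = (\<rho> - inverse \<rho>) / 2"
  have ri: "0 < inverse \<rho>" "inverse \<rho> < 1" using \<rho> by (simp_all add: inverse_less_1_iff)
  have A0: "A > 0" unfolding A_def using \<rho> ri by (simp add: add_pos_pos)
  have B0: "B > 0" unfolding B_def using \<rho> ri by simp
  have AB: "A\<^sup>2 - 1 = B\<^sup>2"
    using \<rho> by (simp add: A_def B_def power2_eq_square field_simps)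
  have "B\<^sup>2 * (Re z)\<^sup>2 + A\<^sup>2 * (Im z)\<^sup>2 \<le> A\<^sup>2 * B\<^sup>2"
    using ellipse_inequality_of_focal_sum_less[of z A] z
    unfolding AB by (simp add: bernstein_ellipse_def A_def)
  text \<open>Cauchy--Schwarz for the point \<open>z\<close> rescaled onto the unit circle.\<close>
  define u where "u = Complex (Re z / A) (Im z / B)"
  define v where "v = Complex (A * Re lam) (- B * Im lam)"
  have "(norm u)\<^sup>2 \<le> 1"
    using A0 B0 \<open>B\<^sup>2 * (Re z)\<^sup>2 + A\<^sup>2 * (Im z)\<^sup>2 \<le> A\<^sup>2 * B\<^sup>2\<close>
    by (simp add: u_def cmod_power2 power_divide field_simps)
  then have "norm u \<le> 1" by (simp add: power_le_one_iff)
  have "Re (z * lam) = u \<bullet> v" using A0 B0 by (simp add: u_def v_def inner_complex_def)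
  also have "\<dots> \<le> norm u * norm v" using Cauchy_Schwarz_ineq2[of u v] by linarith
  also have "\<dots> \<le> norm v" using \<open>norm u \<le> 1\<close> by (simp add: mult_left_le_one_le)
  also have "norm v = sqrt ((Re lam)\<^sup>2 * A\<^sup>2 + (Im lam)\<^sup>2 * B\<^sup>2)"
    by (simp add: v_def complex_norm power_mult_distrib mult.commute)
  also have "\<dots> = sqrt (((Re lam)\<^sup>2 * (\<rho> + inverse \<rho>)\<^sup>2 + (Im lam)\<^sup>2 * (\<rho> - inverse \<rho>)\<^sup>2) / 2\<^sup>2)"
    unfolding A_def B_def power_divide by (simp add: add_divide_distrib)
  also have "\<dots> = sqrt ((Re lam)\<^sup>2 * (\<rho> + inverse \<rho>)\<^sup>2 + (Im lam)\<^sup>2 * (\<rho> - inverse \<rho>)\<^sup>2) / 2"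
    by (simp add: real_sqrt_divide)
  finally show ?thesis .
qed

lemma convex_strict_sublevel:
  assumes "convex_on UNIV f"
  shows "convex {x. f x < c}"
  unfolding convex_alt
proof (intro ballI allI impI)
  fix x y and u :: real
  assume x: "x \<in> {x. f x < c}" and y: "y \<in> {x. f x < c}" and u: "0 \<le> u \<and> u \<le> 1"
  have "(1 - u) * f x + u * f y < c"
  proof (cases "u = 0")
    case False
    then have "u * f y < u * c" using y u by (simp add: mult_strict_left_mono)
    moreover have "(1 - u) * f x \<le> (1 - u) * c" using x u by (intro mult_left_mono) auto
    ultimately show ?thesis by (simp add: algebra_simps)
  qed (use x in simp)
  then show "(1 - u) *\<^sub>R x + u *\<^sub>R y \<in> {x. f x < c}"
    using convex_onD[OF assms, of u x y] u by simp
qed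

lemma open_bernstein_ellipse: "open (bernstein_ellipse \<rho>)"
  unfolding bernstein_ellipse_def by (intro open_Collect_less continuous_intros)

lemma convex_bernstein_ellipse: "convex (bernstein_ellipse \<rho>)"
proof -
  have "convex_on UNIV (\<lambda>z::complex. dist 1 z + dist (-1) z)"
    using convex_on_dist[OF convex_UNIV, of 1] convex_on_dist[OF convex_UNIV, of "-1"]
    by (rule convex_on_add)
  moreover have "bernstein_ellipse \<rho> = {z. dist 1 z + dist (-1) z < \<rho> + inverse \<rho>}"
    by (simp add: bernstein_ellipse_def dist_norm norm_minus_commute add.commute)
  ultimately show ?thesis by (simp add: convex_strict_sublevel)
qed

lemma of_real_in_bernstein_ellipse:
  assumes "\<rho> > 1" "x \<in> {-1..1}"
  shows "complex_of_real x \<in> bernstein_ellipse \<rho>"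
proof -
  have "cmod (of_real x - 1) = \<bar>x - 1\<bar>" by (metis norm_of_real of_real_1 of_real_diff)
  moreover have "cmod (of_real x + 1) = \<bar>x + 1\<bar>" by (metis norm_of_real of_real_1 of_real_add)
  moreover have "0 < (\<rho> - 1)\<^sup>2 / \<rho>" using assms(1) by simp
  moreover have "(\<rho> - 1)\<^sup>2 / \<rho> = \<rho> + inverse \<rho> - 2"
    using assms(1) by (simp add: power2_eq_square field_simps)
  ultimately show ?thesis using assms(2) by (simp add: bernstein_ellipse_def)
qed

lemma norm_add_one_le_on_bernstein_ellipse:
  assumes "z \<in> bernstein_ellipse \<rho>"
  shows "cmod (z + 1) \<le> (\<rho> + inverse \<rho> + 2) / 2"
  using assms norm_triangle_ineq[of "z - 1" 2] by (simp add: bernstein_ellipse_def add.commute)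

lemma norm_add_one_mult_zeta_le_on_bernstein_ellipse:
  assumes \<rho>: "\<rho> > 1" and \<tau>: "\<tau> \<ge> 0" and z: "z \<in> bernstein_ellipse \<rho>"
  shows "cmod (z + 1) * zeta (\<tau> * Re ((z + 1) * lam))
           \<le> (\<rho> + inverse \<rho> + 2) / 2 *
              zeta (\<tau> * (Re lam + sqrt ((Re lam)\<^sup>2 * (\<rho> + inverse \<rho>)\<^sup>2 + (Im lam)\<^sup>2 * (\<rho> - inverse \<rho>)\<^sup>2) / 2))"
proof (rule mult_mono)
  show "cmod (z + 1) \<le> (\<rho> + inverse \<rho> + 2) / 2"
    using z by (rule norm_add_one_le_on_bernstein_ellipse)
  show "zeta (\<tau> * Re ((z + 1) * lam))
          \<le> zeta (\<tau> * (Re lam + sqrt ((Re lam)\<^sup>2 * (\<rho> + inverse \<rho>)\<^sup>2 + (Im lam)\<^sup>2 * (\<rho> - inverse \<rho>)\<^sup>2) / 2))"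
    using Re_mult_le_on_bernstein_ellipse[OF \<rho> z, of lam] \<tau>
    by (intro zeta_mono mult_left_mono) (simp_all add: distrib_right)
next
  show "0 \<le> (\<rho> + inverse \<rho> + 2) / 2" using \<rho> by (simp add: add_nonneg_nonneg)
  show "0 \<le> zeta (\<tau> * Re ((z + 1) * lam))" using zeta_pos less_imp_le by blast
qed

definition joukowski :: "complex \<Rightarrow> complex" where
  "joukowski w = (w + inverse w) / 2"

lemma joukowski_cis: "joukowski (cis \<theta>) = of_real (cos \<theta>)"
  unfolding joukowski_def cis_inverse by (simp add: complex_eq_iff)

lemma holomorphic_on_joukowski: "0 \<notin> S \<Longrightarrow> joukowski holomorphic_on S"
  unfolding joukowski_def by (intro holomorphic_intros) auto

lemma joukowski_focal_distances:
  assumes "w \<noteq> 0"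
  shows "cmod (joukowski w - 1) + cmod (joukowski w + 1) = cmod w + inverse (cmod w)"
proof -
  have "joukowski w - 1 = (w - 1)\<^sup>2 / (2 * w)" "joukowski w + 1 = (w + 1)\<^sup>2 / (2 * w)"
    using assms by (simp_all add: joukowski_def field_simps power2_eq_square)
  then have "cmod (joukowski w - 1) + cmod (joukowski w + 1)
               = ((cmod (w - 1))\<^sup>2 + (cmod (w + 1))\<^sup>2) / (2 * cmod w)"
    by (simp add: norm_divide norm_mult norm_power add_divide_distrib)
  also have "(cmod (w - 1))\<^sup>2 + (cmod (w + 1))\<^sup>2 = 2 * (cmod w)\<^sup>2 + 2"
    by (simp add: cmod_power2) (simp add: power2_eq_square algebra_simps)
  finally show ?thesis using assms by (simp add: field_simps power2_eq_square)
qed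

lemma joukowski_in_bernstein_ellipse:
  assumes \<rho>: "\<rho> > 1" and w: "1 / \<rho> < cmod w" "cmod w < \<rho>"
  shows "joukowski w \<in> bernstein_ellipse \<rho>"
proof -
  define t where "t = cmod w"
  have t: "1 / \<rho> < t" "t < \<rho>" "t > 0" using w \<rho> unfolding t_def by (auto intro: less_trans[of 0 "1 / \<rho>"])
  have "t * \<rho> > 1" using t(1) \<rho> by (simp add: divide_less_eq mult.commute)
  then have "(\<rho> - t) * (t * \<rho> - 1) / (t * \<rho>) > 0" using t \<rho> by simp
  also have "(\<rho> - t) * (t * \<rho> - 1) / (t * \<rho>) = (\<rho> + inverse \<rho>) - (t + inverse t)"
    using t \<rho> by (simp add: field_simps)
  finally show ?thesis
    using joukowski_focal_distances[of w] t unfolding bernstein_ellipse_def t_def by simp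
qed

section \<open>Interpolation error for analytic functions\<close>

lemma cheb_interp_error_le_holomorphic_radius:
  fixes U :: "complex \<Rightarrow> complex"
  assumes K: "K \<ge> 1" and r: "1 < r" "r < \<rho>"
    and hol: "U holomorphic_on bernstein_ellipse \<rho>"
    and bd: "\<And>z. z \<in> bernstein_ellipse \<rho> \<Longrightarrow> norm (U z) \<le> M"
    and t: "t \<in> {-1..1}"
  shows "norm (U (of_real t) - cheb_interp K (\<lambda>x. U (of_real x)) t) \<le> 4 * M / (r ^ K * (r - 1))"
proof -
  define S where "S = ball 0 \<rho> - cball (0::complex) (1 / \<rho>)"
  have \<rho>: "\<rho> > 1" using r by simp
  have S: "open S" unfolding S_def by (intro open_Diff open_ball closed_cball)
  have JS: "joukowski ` S \<subseteq> bernstein_ellipse \<rho>"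
    using joukowski_in_bernstein_ellipse[OF \<rho>] by (auto simp: S_def)
  have hol_g: "(U \<circ> joukowski) holomorphic_on S"
    using \<rho> by (intro holomorphic_on_compose_gen[OF holomorphic_on_joukowski hol JS]) (auto simp: S_def)
  have "1 / \<rho> < 1 / r" using r by (simp add: frac_less2)
  then have annulus: "{z. 1 / r \<le> cmod z \<and> cmod z \<le> r} \<subseteq> S"
    using r by (auto simp: S_def)
  have bd_g: "norm ((U \<circ> joukowski) z) \<le> M" if "1 / r \<le> cmod z" "cmod z \<le> r" for z
    using annulus JS bd that by auto
  obtain c d where c: "\<And>k. norm (c k) \<le> M / r ^ k" and d: "\<And>k. norm (d k) \<le> M / r ^ Suc k"
    and laurent: "\<And>w. cmod w = 1 \<Longrightarrow> (\<lambda>k. c k * w ^ k + d k / w ^ Suc k) sums (U \<circ> joukowski) w"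
    using laurent_expansion_unit_circle[OF r(1) S annulus hol_g bd_g] by blast
  have "norm (U 0) \<le> M" using bd[OF of_real_in_bernstein_ellipse[OF \<rho>, of 0]] by simp
  then have M: "M \<ge> 0" using norm_ge_zero[of "U 0"] by linarith
  define a where "a k = c k + (if k = 0 then 0 else d (k - 1))" for k
  show ?thesis
  proof (rule cheb_interp_error_le_coeffs[OF K r(1) M _ _ t])
    fix x :: real assume x: "x \<in> {-1..1}"
    have "(\<lambda>k. a k * of_real (cos (real k * arccos x))) sums (U \<circ> joukowski) (cis (arccos x))"
      unfolding a_def by (rule cosine_expansion_of_symmetric[OF r(1) c laurent]) (simp_all add: joukowski_cis)
    then show "(\<lambda>k. a k * of_real (poly (chebyshev_poly k) x)) sums U (of_real x)"
      using x by (simp add: poly_chebyshev_poly_arccos joukowski_cis cos_arccos)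
  next
    fix k :: nat assume "k > K"
    then have "norm (a k) \<le> norm (c k) + norm (d (k - 1))" by (simp add: a_def norm_triangle_ineq)
    also have "\<dots> \<le> M / r ^ k + M / r ^ k" using c[of k] d[of "k - 1"] \<open>k > K\<close> by simp
    finally show "norm (a k) \<le> 2 * M / r ^ k" by simp
  qed
qed

lemma cheb_interp_error_le_holomorphic:
  fixes U :: "complex \<Rightarrow> complex"
  assumes K: "K \<ge> 1" and \<rho>: "\<rho> > 1"
    and hol: "U holomorphic_on bernstein_ellipse \<rho>"
    and bd: "\<And>z. z \<in> bernstein_ellipse \<rho> \<Longrightarrow> norm (U z) \<le> M"
    and t: "t \<in> {-1..1}"
  shows "norm (U (of_real t) - cheb_interp K (\<lambda>x. U (of_real x)) t) \<le> 4 * M / (\<rho> ^ K * (\<rho> - 1))"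
proof (rule tendsto_lowerbound)
  have "((\<lambda>r. 4 * M / (r ^ K * (r - 1))) \<longlongrightarrow> 4 * M / (\<rho> ^ K * (\<rho> - 1))) (at \<rho>)"
    using \<rho> by (intro tendsto_intros) auto
  then show "((\<lambda>r. 4 * M / (r ^ K * (r - 1))) \<longlongrightarrow> 4 * M / (\<rho> ^ K * (\<rho> - 1))) (at_left \<rho>)"
    by (rule tendsto_within_subset) simp
  show "\<forall>\<^sub>F r in at_left \<rho>. norm (U (of_real t) - cheb_interp K (\<lambda>x. U (of_real x)) t) \<le> 4 * M / (r ^ K * (r - 1))"
    using eventually_at_left_real[OF \<rho>]
    by eventually_elim (use cheb_interp_error_le_holomorphic_radius[OF K _ _ hol bd t] in auto)
qed (rule trivial_limit_at_left_real)

section \<open>Analytic continuation of the exponential convolution\<close>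

lemma holomorphic_segment_primitive:
  assumes "open E" "convex E" "a \<in> E" "h holomorphic_on E"
  obtains G where "G holomorphic_on E" "\<And>z. z \<in> E \<Longrightarrow> (h has_contour_integral G z) (linepath a z)"
proof -
  obtain G where G: "\<And>x. x \<in> E \<Longrightarrow> (G has_field_derivative h x) (at x within E)"
    using holomorphic_convex_primitive'[OF assms(2,1,4)] by blast
  show ?thesis
  proof
    have "G holomorphic_on E"
      using G unfolding holomorphic_on_def field_differentiable_def by blast
    then show "(\<lambda>z. G z - G a) holomorphic_on E" by (intro holomorphic_intros)
    show "(h has_contour_integral G z - G a) (linepath a z)" if "z \<in> E" for z
      using contour_integral_primitive[OF G, of "linepath a z"] closed_segment_subset[OF assms(3) that assms(2)]
      by simp
  qed
qed

lemma holomorphic_exp_kernel_segment_integral: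
  fixes F :: "complex \<Rightarrow> complex"
  assumes "open E" "convex E" "a \<in> E" "F holomorphic_on E"
  obtains V where "V holomorphic_on E"
    "\<And>z. z \<in> E \<Longrightarrow> ((\<lambda>s. exp ((z - s) * w) * F s) has_contour_integral V z) (linepath a z)"
proof -
  have "(\<lambda>s. exp (- (s * w)) * F s) holomorphic_on E" by (intro holomorphic_intros assms(4))
  then obtain G where holG: "G holomorphic_on E"
    and G: "\<And>z. z \<in> E \<Longrightarrow> ((\<lambda>s. exp (- (s * w)) * F s) has_contour_integral G z) (linepath a z)"
    using holomorphic_segment_primitive[OF assms(1-3)] by blast
  show ?thesis
  proof
    show "(\<lambda>z. exp (z * w) * G z) holomorphic_on E" by (intro holomorphic_intros holG)
    show "((\<lambda>s. exp ((z - s) * w) * F s) has_contour_integral exp (z * w) * G z) (linepath a z)"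
      if "z \<in> E" for z
    proof (rule has_contour_integral_eq[OF has_contour_integral_lmul[OF G[OF that]]])
      fix s
      have "exp (z * w) * exp (- (s * w)) = exp ((z - s) * w)"
        by (simp add: algebra_simps flip: exp_add)
      then show "exp (z * w) * (exp (- (s * w)) * F s) = exp ((z - s) * w) * F s"
        by (simp add: mult.assoc[symmetric])
    qed
  qed
qed

lemma exp_convolution_eq_contour_integral:
  assumes V: "((\<lambda>s. exp ((of_real x - s) * (of_real \<tau> * lam)) * F s) has_contour_integral V) (linepath (-1) (of_real x))"
    and F: "\<And>s. s \<in> {-1..x} \<Longrightarrow> F (of_real s) = \<phi> s" and x: "-1 \<le> x"
  shows "exp_convolution \<tau> lam \<phi> x = of_real \<tau> * V"
proof (cases "x = -1")
  case False
  then have "((\<lambda>s. exp ((of_real x - of_real s) * (of_real \<tau> * lam)) * F (of_real s)) has_integral V) {-1..x}"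
    using V x by (subst (asm) has_contour_integral_linepath_Reals_iff) auto
  then have "((\<lambda>s. exp (of_real (\<tau> * (x - s)) * lam) * \<phi> s) has_integral V) {-1..x}"
    by (rule has_integral_eq[rotated]) (simp add: F algebra_simps)
  then show ?thesis by (simp add: exp_convolution_def integral_unique)
qed (use V in \<open>simp add: exp_convolution_def\<close>)

lemma norm_contour_integral_exp_linepath_le:
  fixes F :: "complex \<Rightarrow> complex"
  assumes V: "((\<lambda>s. exp ((z - s) * w) * F s) has_contour_integral V) (linepath a z)"
    and F: "\<And>s. s \<in> closed_segment a z \<Longrightarrow> norm (F s) \<le> M"
  shows "norm V \<le> M * cmod (z - a) * zeta (Re ((z - a) * w))"
proof -
  let ?c = "Re ((z - a) * w)"
  have Z: "((\<lambda>t. M * cmod (z - a) * exp (?c * (1 - t))) has_integral M * cmod (z - a) * zeta ?c) {0..1}"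
    using has_integral_exp_zeta[of 0 1 ?c] by (intro has_integral_mult_right) simp
  have V': "((\<lambda>t. exp ((z - linepath a z t) * w) * F (linepath a z t) * (z - a)) has_integral V) {0..1}"
    using V unfolding has_contour_integral_linepath .
  have "norm V \<le> integral {0..1} (\<lambda>t. M * cmod (z - a) * exp (?c * (1 - t)))"
    unfolding integral_unique[OF V', symmetric]
  proof (rule integral_norm_bound_integral)
    fix t :: real assume t: "t \<in> {0..1}"
    have eq: "(z - linepath a z t) * w = of_real (1 - t) * ((z - a) * w)"
      by (simp add: linepath_def scaleR_conv_of_real algebra_simps)
    have "norm (exp ((z - linepath a z t) * w)) = exp (?c * (1 - t))"
      unfolding norm_exp_eq_Re eq by (simp add: mult.commute)
    then have "norm (exp ((z - linepath a z t) * w) * F (linepath a z t) * (z - a))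
                 = exp (?c * (1 - t)) * norm (F (linepath a z t)) * cmod (z - a)"
      by (simp only: norm_mult)
    also have "\<dots> \<le> exp (?c * (1 - t)) * M * cmod (z - a)"
      using t F by (intro mult_right_mono mult_left_mono) (auto simp: linepath_in_path)
    finally show "norm (exp ((z - linepath a z t) * w) * F (linepath a z t) * (z - a))
                    \<le> M * cmod (z - a) * exp (?c * (1 - t))"
      by (simp add: mult_ac)
  qed (use V' Z in blast)+
  also have "\<dots> = M * cmod (z - a) * zeta ?c" using integral_unique[OF Z] .
  finally show ?thesis .
qed

lemma exp_convolution_bernstein_extension:
  fixes F :: "complex \<Rightarrow> complex" and \<phi> :: "real \<Rightarrow> complex"
  assumes \<rho>: "\<rho> > 1" and \<tau>: "\<tau> > 0"
    and holF: "F holomorphic_on bernstein_ellipse \<rho>"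
    and F\<phi>: "\<And>x. x \<in> {-1..1} \<Longrightarrow> F (of_real x) = \<phi> x"
    and F_le: "\<And>z. z \<in> bernstein_ellipse \<rho> \<Longrightarrow> cmod (F z) \<le> M"
  obtains U where "U holomorphic_on bernstein_ellipse \<rho>"
    "\<And>x. x \<in> {-1..1} \<Longrightarrow> U (of_real x) = exp_convolution \<tau> lam \<phi> x"
    "\<And>z. z \<in> bernstein_ellipse \<rho> \<Longrightarrow>
       norm (U z) \<le> \<tau> * ((\<rho> + inverse \<rho> + 2) / 2) *
                     zeta (\<tau> * (Re lam + sqrt ((Re lam)\<^sup>2 * (\<rho> + inverse \<rho>)\<^sup>2
                                              + (Im lam)\<^sup>2 * (\<rho> - inverse \<rho>)\<^sup>2) / 2)) * M"
proof -
  define E where "E = bernstein_ellipse \<rho>"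
  define Z where "Z = zeta (\<tau> * (Re lam + sqrt ((Re lam)\<^sup>2 * (\<rho> + inverse \<rho>)\<^sup>2
                                                 + (Im lam)\<^sup>2 * (\<rho> - inverse \<rho>)\<^sup>2) / 2))"
  have E_real: "complex_of_real x \<in> E" if "x \<in> {-1..1}" for x
    unfolding E_def using \<rho> that by (rule of_real_in_bernstein_ellipse)
  have "cmod (F 0) \<le> M" using F_le E_real[of 0] by (simp add: E_def)
  then have M: "0 \<le> M" using norm_ge_zero[of "F 0"] by linarith
  have m1: "-1 \<in> E" using E_real[of "-1"] by simp
  obtain V where holV: "V holomorphic_on E" and V: "\<And>z. z \<in> E \<Longrightarrow>
      ((\<lambda>s. exp ((z - s) * (of_real \<tau> * lam)) * F s) has_contour_integral V z) (linepath (-1) z)"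
    using holomorphic_exp_kernel_segment_integral[OF open_bernstein_ellipse convex_bernstein_ellipse
            m1[unfolded E_def] holF] unfolding E_def by blast
  have U_le: "norm (of_real \<tau> * V z) \<le> \<tau> * ((\<rho> + inverse \<rho> + 2) / 2) * Z * M" if z: "z \<in> E" for z
  proof -
    have "closed_segment (-1) z \<subseteq> E"
      using m1 z convex_bernstein_ellipse unfolding E_def by (intro closed_segment_subset)
    then have "norm (V z) \<le> M * cmod (z - -1) * zeta (Re ((z - -1) * (of_real \<tau> * lam)))"
      using F_le by (intro norm_contour_integral_exp_linepath_le[OF V[OF z]]) (auto simp: E_def)
    also have "Re ((z - -1) * (of_real \<tau> * lam)) = \<tau> * Re ((z + 1) * lam)"
      by (simp add: algebra_simps)
    also have "M * cmod (z - -1) * zeta (\<tau> * Re ((z + 1) * lam)) \<le> M * ((\<rho> + inverse \<rho> + 2) / 2 * Z)"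
      using norm_add_one_mult_zeta_le_on_bernstein_ellipse[OF \<rho> _ z[unfolded E_def], of \<tau> lam] \<tau> M
      unfolding Z_def by (simp add: mult.assoc mult_left_mono)
    finally show ?thesis
      using \<tau> by (simp add: norm_mult mult_left_mono mult_ac)
  qed
  have "(\<lambda>z. of_real \<tau> * V z) holomorphic_on E"
    using holV by (intro holomorphic_intros)
  moreover have "of_real \<tau> * V (of_real x) = exp_convolution \<tau> lam \<phi> x" if "x \<in> {-1..1}" for x
    using exp_convolution_eq_contour_integral[OF V[OF E_real[OF that]]] F\<phi> that by simp
  ultimately show ?thesis
    using that U_le unfolding E_def Z_def by blast
qed

lemma exp_convolution_interp_error_le_analytic:
  fixes F :: "complex \<Rightarrow> complex" and \<phi> :: "real \<Rightarrow> complex" and lam :: complex and \<tau> \<rho> :: real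
  assumes K: "K \<ge> 1" and \<rho>: "\<rho> > 1" and \<tau>: "\<tau> > 0"
    and holF: "F holomorphic_on bernstein_ellipse \<rho>"
    and F\<phi>: "\<And>x. x \<in> {-1..1} \<Longrightarrow> F (of_real x) = \<phi> x"
    and bdF: "bounded (F ` bernstein_ellipse \<rho>)"
  defines "u \<equiv> exp_convolution \<tau> lam \<phi>"
  shows "C0norm (\<lambda>t. u t - cheb_interp K u t)
           \<le> 2 * \<tau> * (\<rho> + inverse \<rho> + 2) / (\<rho> ^ K * (\<rho> - 1)) *
              zeta (\<tau> * (Re lam + sqrt ((Re lam)\<^sup>2 * (\<rho> + inverse \<rho>)\<^sup>2
                                         + (Im lam)\<^sup>2 * (\<rho> - inverse \<rho>)\<^sup>2) / 2)) *
              (SUP z\<in>bernstein_ellipse \<rho>. cmod (F z))"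
    (is "_ \<le> 2 * \<tau> * ?c / ?d * ?Z * ?M")
proof -
  have "bdd_above ((\<lambda>z. cmod (F z)) ` bernstein_ellipse \<rho>)"
    using bdF unfolding bounded_iff by (auto intro: bdd_aboveI)
  then have "cmod (F z) \<le> ?M" if "z \<in> bernstein_ellipse \<rho>" for z
    using that by (rule cSUP_upper2) simp
  then obtain U where holU: "U holomorphic_on bernstein_ellipse \<rho>"
    and Uu: "\<And>x. x \<in> {-1..1} \<Longrightarrow> U (of_real x) = u x"
    and U_le: "\<And>z. z \<in> bernstein_ellipse \<rho> \<Longrightarrow> norm (U z) \<le> \<tau> * ((\<rho> + inverse \<rho> + 2) / 2) * ?Z * ?M"
    using exp_convolution_bernstein_extension[OF \<rho> \<tau> holF F\<phi>] unfolding u_def by blast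
  have "C0norm (\<lambda>t. u t - cheb_interp K u t) \<le> 4 * (\<tau> * ((\<rho> + inverse \<rho> + 2) / 2) * ?Z * ?M) / ?d"
  proof (rule C0norm_le)
    fix t :: real assume t: "t \<in> {-1..1}"
    have "cheb_interp K u t = cheb_interp K (\<lambda>x. U (of_real x)) t"
      using Uu cheb_pt_in_interval by (intro cheb_interp_cong) simp
    then show "norm (u t - cheb_interp K u t) \<le> 4 * (\<tau> * ((\<rho> + inverse \<rho> + 2) / 2) * ?Z * ?M) / ?d"
      using cheb_interp_error_le_holomorphic[OF K \<rho> holU U_le t] Uu[OF t] by simp
  qed
  also have "4 * (\<tau> * ((\<rho> + inverse \<rho> + 2) / 2) * ?Z * ?M) = 2 * \<tau> * ?c * ?Z * ?M"
    by (simp add: field_simps)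
  finally show ?thesis by simp
qed

theorem lemma4p9:
  fixes K q :: nat and \<phi> :: "real \<Rightarrow> complex" and D :: "nat \<Rightarrow> real \<Rightarrow> complex"
    and lam :: complex and \<tau> \<sigma> :: real
  assumes K: "K \<ge> 1"
    and smooth: "D 0 = \<phi>"
      "\<And>i t. t \<in> {-1..1} \<Longrightarrow> (D i has_vector_derivative D (Suc i) t) (at t within {-1..1})"
    and tau: "\<tau> > 0"
    and q: "q \<le> K"
    and sigma: "\<And>f g. deriv_chain (Suc q) g f \<Longrightarrow> continuous_on {-1..1} (g (Suc q)) \<Longrightarrow>
                 C0norm (\<lambda>t. f t - cheb_interp K f t) \<le> \<sigma> * C0norm (g (Suc q))"
  defines "u \<equiv> (\<lambda>t. of_real \<tau> * integral {-1..t} (\<lambda>s. exp (of_real (\<tau> * (t - s)) * lam) * \<phi> s))"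
  shows "(C0norm (\<lambda>t. u t - cheb_interp K u t)
           \<le> \<sigma> * (cmod (of_real \<tau> * lam) ^ (q + 1) *
                   (if Re lam = 0 then 2 * \<tau> else (exp (2 * \<tau> * Re lam) - 1) / Re lam) * C0norm \<phi>
                 + \<tau> * (\<Sum>i\<le>q. cmod (of_real \<tau> * lam) ^ i * C0norm (D (q - i)))))
    \<and> (\<forall>\<rho> F. \<rho> > 1 \<longrightarrow> F holomorphic_on bernstein_ellipse \<rho> \<longrightarrow>
           (\<forall>x\<in>{-1..1}. F (of_real x) = \<phi> x) \<longrightarrow>
           bounded (F ` bernstein_ellipse \<rho>) \<longrightarrow>
           C0norm (\<lambda>t. u t - cheb_interp K u t)
             \<le> 2 * \<tau> * (\<rho> + inverse \<rho> + 2) / (\<rho> ^ K * (\<rho> - 1)) *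
                zeta (\<tau> * (Re lam + sqrt ((Re lam)\<^sup>2 * (\<rho> + inverse \<rho>)\<^sup>2
                                           + (Im lam)\<^sup>2 * (\<rho> - inverse \<rho>)\<^sup>2) / 2)) *
                (SUP z\<in>bernstein_ellipse \<rho>. cmod (F z)))"
proof -
  have u: "u = exp_convolution \<tau> lam \<phi>"
    unfolding u_def exp_convolution_def ..
  have "2 * \<tau> * zeta (2 * \<tau> * Re lam)
          = (if Re lam = 0 then 2 * \<tau> else (exp (2 * \<tau> * Re lam) - 1) / Re lam)"
    using mult_zeta_mult[of "2 * \<tau>" "Re lam"] by (simp add: mult_ac)
  moreover have "C0norm (\<lambda>t. u t - cheb_interp K u t)
           \<le> \<sigma> * (cmod (of_real \<tau> * lam) ^ (q + 1) * (2 * \<tau> * zeta (2 * \<tau> * Re lam)) * C0norm \<phi>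
                  + \<tau> * (\<Sum>i\<le>q. cmod (of_real \<tau> * lam) ^ i * C0norm (D (q - i))))"
    unfolding u smooth(1)[symmetric]
    using tau smooth(2) sigma by (rule exp_convolution_interp_error_le_smooth[where D = D])
  moreover have "C0norm (\<lambda>t. u t - cheb_interp K u t)
             \<le> 2 * \<tau> * (\<rho> + inverse \<rho> + 2) / (\<rho> ^ K * (\<rho> - 1)) *
                zeta (\<tau> * (Re lam + sqrt ((Re lam)\<^sup>2 * (\<rho> + inverse \<rho>)\<^sup>2
                                           + (Im lam)\<^sup>2 * (\<rho> - inverse \<rho>)\<^sup>2) / 2)) *
                (SUP z\<in>bernstein_ellipse \<rho>. cmod (F z))"
    if "\<rho> > 1" "F holomorphic_on bernstein_ellipse \<rho>" "\<forall>x\<in>{-1..1}. F (of_real x) = \<phi> x"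
       "bounded (F ` bernstein_ellipse \<rho>)" for \<rho> F
    unfolding u using that by (intro exp_convolution_interp_error_le_analytic[OF K _ tau]) auto
  ultimately show ?thesis by auto
qed

end
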